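(* (a) Let $g\in\mathbb Q(x)$ be a rational function with rational coefficients that is defined on $(0,1)$ and satisfies $0<g(p)<1/2$ for all $p\in(0,1)$. Then there is a pushdown automaton that simulates the function $\gamma(p)=\dfrac{1-\sqrt{1-2g(p)}}{2g(p)}$ on $(0,1)$. (b) There is a pushdown automaton that simulates $f(p)=\sqrt p$ on $(0,1)$.
   Context: For $w\in\{0,1\}^*$ let $n_i(w)$ be the number of $i$'s in $w$; $\mathbf P_p[w]=p^{n_1(w)}(1-p)^{n_0(w)}$, $\mathbf P_p[L]=\sum_{w\in L}\mathbf P_p[w]$. A simulation of $f:\mathcal D\to[0,1]$ ($\mathcal D\subseteq(0,1)$) is a pair of disjoint languages $L_0,L_1\subseteq\{0,1\}^*$ with $L_0\cup L_1$ prefix-free such that $\mathbf P_p[L_0\cup L_1]=1$ and $\mathbf P_p[L_1]=f(p)$ for all $p\in\mathcal D$. A (deterministic) pushdown automaton over input alphabet $\{0,1\}$ consists of a finite state set $S$ with start state $s_0$, a finite stack alphabet $\Lambda$, a nonempty initial stack word $\tau$ (leftmost symbol on top), a transition map assigning to each $(s,x,b)\in S\times\{0,1\}\times\Lambda$ a new state $\sigma(s,x,b)$ and a word $\rho(s,x,b)\in\Lambda^*$ replacing the top symbol $b$, and disjoint sets $S_0,S_1\subseteq S$. It reads one bit per step, stops when the stack becomes empty, and outputs $i$ if it is then in a state of $S_i$; $L_i$ is the set of input strings after whose last symbol the stack first becomes empty in a state of $S_i$. It simulates $f$ if $(L_0,L_1)$ is a simulation of $f$. *)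

theory Defs
  imports "HOL-Analysis.Analysis" "HOL-Computational_Algebra.Polynomial"
begin

text \<open>Words over {0,1} are bool lists; True stands for the bit 1.\<close>

definition n1 :: "bool list \<Rightarrow> nat" where
  "n1 w = length (filter (\<lambda>x. x) w)"

definition n0 :: "bool list \<Rightarrow> nat" where
  "n0 w = length (filter (\<lambda>x. \<not> x) w)"

definition Pword :: "real \<Rightarrow> bool list \<Rightarrow> real" where
  "Pword p w = p ^ n1 w * (1 - p) ^ n0 w"

definition Plang :: "real \<Rightarrow> bool list set \<Rightarrow> real" where
  "Plang p L = infsum (Pword p) L"

definition prefix_free :: "bool list set \<Rightarrow> bool" where
  "prefix_free L \<longleftrightarrow> (\<forall>u\<in>L. \<forall>v\<in>L. (\<exists>z. v = u @ z) \<longrightarrow> u = v)"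

definition is_simulation ::
  "bool list set \<Rightarrow> bool list set \<Rightarrow> (real \<Rightarrow> real) \<Rightarrow> real set \<Rightarrow> bool" where
  "is_simulation L0 L1 f D \<longleftrightarrow>
     L0 \<inter> L1 = {} \<and> prefix_free (L0 \<union> L1) \<and>
     (\<forall>p\<in>D. Plang p (L0 \<union> L1) = 1 \<and> Plang p L1 = f p)"

text \<open>Stack words are lists,
  head = top of stack.\<close>

record pda =
  states :: "nat set"
  start :: nat
  stack_alph :: "nat set"
  init_stack :: "nat list"
  trans_state :: "nat \<Rightarrow> bool \<Rightarrow> nat \<Rightarrow> nat"
  trans_push :: "nat \<Rightarrow> bool \<Rightarrow> nat \<Rightarrow> nat list"
  out0 :: "nat set"
  out1 :: "nat set"

definition wf_pda :: "pda \<Rightarrow> bool" where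
  "wf_pda M \<longleftrightarrow>
     finite (states M) \<and> finite (stack_alph M) \<and>
     start M \<in> states M \<and>
     init_stack M \<noteq> [] \<and> set (init_stack M) \<subseteq> stack_alph M \<and>
     (\<forall>s\<in>states M. \<forall>x. \<forall>b\<in>stack_alph M.
        trans_state M s x b \<in> states M \<and> set (trans_push M s x b) \<subseteq> stack_alph M) \<and>
     out0 M \<subseteq> states M \<and> out1 M \<subseteq> states M \<and> out0 M \<inter> out1 M = {}"

text \<open>Running the automaton on a word from a configuration (state, stack).
  Once the stack is empty the machine has stopped and the configuration is frozen.\<close>

fun run :: "pda \<Rightarrow> nat \<times> nat list \<Rightarrow> bool list \<Rightarrow> nat \<times> nat list" where
  "run M c [] = c"
| "run M (s, []) (x # w) = (s, [])"
| "run M (s, b # r) (x # w) =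
     run M (trans_state M s x b, trans_push M s x b @ r) w"

definition pda_lang :: "pda \<Rightarrow> nat set \<Rightarrow> bool list set" where
  "pda_lang M F = {w. snd (run M (start M, init_stack M) w) = [] \<and>
      (\<forall>k < length w. snd (run M (start M, init_stack M) (take k w)) \<noteq> []) \<and>
      fst (run M (start M, init_stack M) w) \<in> F}"

definition pda_simulates :: "pda \<Rightarrow> (real \<Rightarrow> real) \<Rightarrow> real set \<Rightarrow> bool" where
  "pda_simulates M f D \<longleftrightarrow> is_simulation (pda_lang M (out0 M)) (pda_lang M (out1 M)) f D"

end

theory Submission
  imports Defs
begin

text \<open>The automaton reads its input in blocks of \<open>N\<close> bits and keeps a unary counter, initially 1,
  on its stack. A table on \<open>{0,1}^N\<close> classifies each block as \<^term>\<open>Pop\<close>, \<^term>\<open>Push\<close>,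
  \<^term>\<open>Retry\<close> or \<^term>\<open>Reject\<close>; the machine outputs 1 when the counter reaches 0 and 0 after
  a rejection. If \<open>\<pi> v\<close> is the probability of verdict \<open>v\<close>, the probability \<open>y\<close> of ever descending
  one level solves \<open>y = \<pi> Pop + \<pi> Push * y\<^sup>2 + \<pi> Retry * y\<close>. As every block rejects with positive
  probability, the machine halts almost surely, and a bounded harmonic function argument shows that it
  outputs 1 with probability \<open>y\<close>.

  For \<open>sqrt p\<close>, a table on three bits gives \<open>y = 1 - sqrt p\<close>, and exchanging the outputs gives
  \<open>sqrt p\<close>. For \<open>\<gamma>\<close>, the probabilities of \<^term>\<open>Pop\<close>, \<^term>\<open>Push\<close> and \<^term>\<open>Reject\<close> are made
  proportional to \<open>Q\<^sup>2\<close>, \<open>2 P Q\<close> and \<open>Q\<^sup>2 - 2 P Q\<close>, which turns the equation for \<open>y\<close> into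
  \<open>2 \<gamma> = 1 + 2 g \<gamma>\<^sup>2\<close>. Such a table exists because these polynomials are positive on \<open>(0, 1)\<close>: by
  a theorem of Bernstein and Polya, after multiplication by \<open>x ^ s * (1 - x) ^ s\<close> and by a common
  denominator they have Bernstein expansions with natural coefficients, and the coefficient of
  \<open>x ^ k * (1 - x) ^ (N - k)\<close> is realised by that many blocks with \<open>k\<close> ones.\<close>

section \<open>Random runs of a pushdown automaton\<close>

type_synonym config = "nat \<times> nat list"

definition words :: "nat \<Rightarrow> bool list set" where
  "words n = {w. length w = n}"

lemma finite_words [simp]: "finite (words n)"
  unfolding words_def using finite_lists_length_eq[of "UNIV :: bool set" n] by simp

lemma words_0: "words 0 = {[]}"
  by (auto simp: words_def)

lemma words_Suc: "words (Suc n) = Cons True ` words n \<union> Cons False ` words n"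
proof (intro set_eqI iffI)
  fix w assume "w \<in> words (Suc n)"
  then obtain x v where "w = x # v" "v \<in> words n" by (cases w) (auto simp: words_def)
  then show "w \<in> Cons True ` words n \<union> Cons False ` words n" by (cases x) auto
qed (auto simp: words_def)

lemma sum_words_Suc:
  "(\<Sum>w\<in>words (Suc n). h w) = (\<Sum>w\<in>words n. h (True # w)) + (\<Sum>w\<in>words n. h (False # w))"
  unfolding words_Suc by (subst sum.union_disjoint) (auto simp: sum.reindex)

lemma Pword_Nil [simp]: "Pword p [] = 1"
  by (simp add: Pword_def n1_def n0_def)

lemma Pword_Cons: "Pword p (x # w) = (if x then p else 1 - p) * Pword p w"
  by (simp add: Pword_def n1_def n0_def)

lemma Pword_nonneg: "0 \<le> p \<Longrightarrow> p \<le> 1 \<Longrightarrow> 0 \<le> Pword p w"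
  by (simp add: Pword_def)

lemma sum_Pword_words: "(\<Sum>w\<in>words n. Pword p w) = 1"
  by (induction n) (simp_all add: words_0 sum_words_Suc Pword_Cons sum_distrib_left[symmetric])

lemma run_halted [simp]: "run M (s, []) w = (s, [])"
  by (cases w) auto

lemma run_append: "run M c (u @ v) = run M (run M c u) v"
proof (induction u arbitrary: c)
  case (Cons x u)
  then show ?case by (cases c; cases "snd c") auto
qed simp

definition step :: "pda \<Rightarrow> config \<Rightarrow> bool \<Rightarrow> config" where
  "step M c x = run M c [x]"

lemma step_halted [simp]: "step M (s, []) x = (s, [])"
  by (simp add: step_def)

lemma run_Cons: "run M c (x # w) = run M (step M c x) w"
  using run_append[of M c "[x]" w] by (simp add: step_def)

lemma run_preserves:
  assumes "\<And>c x. I c \<Longrightarrow> I (step M c x)" and "I c"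
  shows "I (run M c w)"
  using assms(2) by (induction w arbitrary: c) (simp_all add: run_Cons assms(1))

definition run_expect :: "pda \<Rightarrow> real \<Rightarrow> nat \<Rightarrow> config \<Rightarrow> (config \<Rightarrow> real) \<Rightarrow> real" where
  "run_expect M p n c f = (\<Sum>w\<in>words n. Pword p w * f (run M c w))"

lemma run_expect_0 [simp]: "run_expect M p 0 c f = f c"
  by (simp add: run_expect_def words_0)

lemma run_expect_Suc:
  "run_expect M p (Suc n) c f =
     p * run_expect M p n (step M c True) f + (1 - p) * run_expect M p n (step M c False) f"
  by (simp add: run_expect_def sum_words_Suc Pword_Cons run_Cons sum_distrib_left mult.assoc)

lemma run_expect_add:
  "run_expect M p (n + m) c f = run_expect M p n c (\<lambda>c'. run_expect M p m c' f)"
  by (induction n arbitrary: c) (simp_all add: run_expect_Suc)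

lemma run_expect_const [simp]: "run_expect M p n c (\<lambda>_. a) = a"
  by (simp add: run_expect_def sum_distrib_right[symmetric] sum_Pword_words)

lemma run_expect_halted: "run_expect M p n (s, []) f = f (s, [])"
  by (simp add: run_expect_def sum_distrib_right[symmetric] sum_Pword_words)

lemma run_expect_cong:
  "(\<And>w. length w = n \<Longrightarrow> f (run M c w) = g (run M c w)) \<Longrightarrow> run_expect M p n c f = run_expect M p n c g"
  unfolding run_expect_def by (intro sum.cong) (auto simp: words_def)

lemma run_expect_mono:
  assumes "0 \<le> p" "p \<le> 1" "\<And>w. length w = n \<Longrightarrow> f (run M c w) \<le> g (run M c w)"
  shows "run_expect M p n c f \<le> run_expect M p n c g"
  unfolding run_expect_def using assms
  by (intro sum_mono mult_left_mono) (auto simp: words_def Pword_nonneg)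

lemma run_expect_nonneg:
  "0 \<le> p \<Longrightarrow> p \<le> 1 \<Longrightarrow> (\<And>c. 0 \<le> f c) \<Longrightarrow> 0 \<le> run_expect M p n c f"
  unfolding run_expect_def by (intro sum_nonneg mult_nonneg_nonneg Pword_nonneg) auto

lemma run_expect_cmult: "run_expect M p n c (\<lambda>c. a * f c) = a * run_expect M p n c f"
  by (simp add: run_expect_def sum_distrib_left mult.left_commute)

lemma run_expect_diff:
  "run_expect M p n c (\<lambda>c. f c - g c) = run_expect M p n c f - run_expect M p n c g"
  by (simp add: run_expect_def right_diff_distrib sum_subtractf)

lemma run_expect_abs_le:
  "0 \<le> p \<Longrightarrow> p \<le> 1 \<Longrightarrow> \<bar>run_expect M p n c f\<bar> \<le> run_expect M p n c (\<lambda>c. \<bar>f c\<bar>)"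
  unfolding run_expect_def by (rule order_trans[OF sum_abs]) (simp add: abs_mult Pword_nonneg)

definition lang_from :: "pda \<Rightarrow> nat set \<Rightarrow> config \<Rightarrow> bool list set" where
  "lang_from M F c = {w. snd (run M c w) = [] \<and> (\<forall>k<length w. snd (run M c (take k w)) \<noteq> []) \<and>
     fst (run M c w) \<in> F}"

lemma pda_lang_eq_lang_from: "pda_lang M F = lang_from M F (start M, init_stack M)"
  unfolding pda_lang_def lang_from_def by simp

lemma lang_from_halted: "lang_from M F (s, []) = (if s \<in> F then {[]} else {})"
proof -
  have "w \<in> lang_from M F (s, []) \<longleftrightarrow> w = [] \<and> s \<in> F" for w
    by (cases w) (auto simp: lang_from_def intro: exI[of _ 0])
  then show ?thesis by auto
qed

lemma Cons_in_lang_from: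
  assumes "snd c \<noteq> []"
  shows "x # u \<in> lang_from M F c \<longleftrightarrow> u \<in> lang_from M F (step M c x)"
proof -
  have "(\<forall>k<length (x # u). snd (run M c (take k (x # u))) \<noteq> []) \<longleftrightarrow>
        (\<forall>k<length u. snd (run M (step M c x) (take k u)) \<noteq> [])"
    using assms by (auto simp: run_Cons less_Suc_eq_0_disj)
  then show ?thesis by (simp add: lang_from_def run_Cons)
qed

lemma lang_from_running:
  assumes "snd c \<noteq> []"
  shows "lang_from M F c = Cons True ` lang_from M F (step M c True) \<union> Cons False ` lang_from M F (step M c False)"
proof -
  have "[] \<notin> lang_from M F c" using assms by (simp add: lang_from_def)
  show ?thesis
  proof (intro set_eqI iffI)
    fix w assume w: "w \<in> lang_from M F c"
    with \<open>[] \<notin> lang_from M F c\<close> obtain x u where "w = x # u" by (cases w) auto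
    with w show "w \<in> Cons True ` lang_from M F (step M c True) \<union> Cons False ` lang_from M F (step M c False)"
      using Cons_in_lang_from[OF assms] by (cases x) auto
  qed (use Cons_in_lang_from[OF assms] in auto)
qed

definition halted_in :: "nat set \<Rightarrow> config \<Rightarrow> bool" where
  "halted_in F c \<longleftrightarrow> snd c = [] \<and> fst c \<in> F"

lemma finite_bounded_length: "finite {w \<in> (L :: bool list set). length w \<le> n}"
  by (rule finite_subset[OF _ finite_lists_length_le[of "UNIV :: bool set" n]]) auto

lemma run_expect_halted_in:
  "run_expect M p n c (\<lambda>c. of_bool (halted_in F c)) = (\<Sum>w\<in>{w \<in> lang_from M F c. length w \<le> n}. Pword p w)"
proof (induction n arbitrary: c)
  case 0
  have "{w \<in> lang_from M F c. length w \<le> 0} = (if halted_in F c then {[]} else {})"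
    by (auto simp: lang_from_def halted_in_def)
  then show ?case by simp
next
  case (Suc n)
  show ?case
  proof (cases "snd c = []")
    case True
    then obtain s where c: "c = (s, [])" by (cases c) auto
    have "{w \<in> lang_from M F c. length w \<le> Suc n} = (if s \<in> F then {[]} else {})"
      unfolding c lang_from_halted by auto
    then show ?thesis by (simp add: c run_expect_halted halted_in_def)
  next
    case False
    let ?A = "\<lambda>x. {u \<in> lang_from M F (step M c x). length u \<le> n}"
    have split: "{w \<in> lang_from M F c. length w \<le> Suc n} = Cons True ` ?A True \<union> Cons False ` ?A False"
      unfolding lang_from_running[OF False] by auto
    have "(\<Sum>w\<in>{w \<in> lang_from M F c. length w \<le> Suc n}. Pword p w) =
        (\<Sum>w\<in>Cons True ` ?A True. Pword p w) + (\<Sum>w\<in>Cons False ` ?A False. Pword p w)"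
      unfolding split by (rule sum.union_disjoint) (auto intro: finite_bounded_length)
    also have "\<dots> = p * (\<Sum>w\<in>?A True. Pword p w) + (1 - p) * (\<Sum>w\<in>?A False. Pword p w)"
      by (simp add: sum.reindex Pword_Cons sum_distrib_left)
    finally show ?thesis by (simp add: run_expect_Suc Suc.IH)
  qed
qed

lemma Plang_eq_lim:
  assumes p: "0 \<le> p" "p \<le> 1"
    and lim: "(\<lambda>n. \<Sum>w\<in>{w \<in> L. length w \<le> n}. Pword p w) \<longlonglongrightarrow> l"
  shows "Plang p L = l"
proof -
  let ?s = "\<lambda>n. \<Sum>w\<in>{w \<in> L. length w \<le> n}. Pword p w"
  let ?S = "sum (Pword p) ` {F. finite F \<and> F \<subseteq> L}"
  have "incseq ?s"
    by (intro incseq_SucI sum_mono2) (auto intro: finite_bounded_length Pword_nonneg p)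
  then have s_le: "?s n \<le> l" for n
    using lim by (rule incseq_le)
  have finite_le: "sum (Pword p) F \<le> l" if "finite F" "F \<subseteq> L" for F
  proof -
    have "sum (Pword p) F \<le> ?s (Max (length ` F))"
      using that by (intro sum_mono2) (auto intro: finite_bounded_length Pword_nonneg p)
    then show ?thesis using s_le by (rule order_trans)
  qed
  then have bdd: "bdd_above ?S" by (auto simp: bdd_above_def)
  have "Plang p L = Sup ?S"
    unfolding Plang_def by (rule nonneg_bdd_above_infsum) (use bdd Pword_nonneg p in \<open>auto simp: conj_commute\<close>)
  moreover have "Sup ?S \<le> l"
    by (rule cSUP_least) (auto intro: finite_le)
  moreover have "l \<le> Sup ?S"
    by (rule LIMSEQ_le_const2[OF lim]) (auto intro!: cSUP_upper[OF _ bdd] finite_bounded_length)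
  ultimately show ?thesis by simp
qed

lemma Plang_lang_from:
  assumes "0 \<le> p" "p \<le> 1" "(\<lambda>n. run_expect M p n c (\<lambda>c. of_bool (halted_in F c))) \<longlonglongrightarrow> l"
  shows "Plang p (lang_from M F c) = l"
  using assms by (intro Plang_eq_lim) (auto simp: run_expect_halted_in)

lemma run_expect_harmonic:
  assumes closed: "\<And>c x. I c \<Longrightarrow> I (step M c x)"
    and harmonic: "\<And>c. I c \<Longrightarrow> snd c \<noteq> [] \<Longrightarrow> \<phi> c = p * \<phi> (step M c True) + (1 - p) * \<phi> (step M c False)"
    and "I c"
  shows "run_expect M p n c \<phi> = \<phi> c"
  using \<open>I c\<close>
proof (induction n arbitrary: c)
  case (Suc n)
  show ?case
  proof (cases "snd c = []")
    case True
    then show ?thesis by (metis prod.collapse run_expect_halted)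
  qed (simp add: run_expect_Suc Suc closed harmonic)
qed simp

lemma run_expect_halted_in_tendsto:
  assumes p: "0 \<le> p" "p \<le> 1"
    and closed: "\<And>c x. I c \<Longrightarrow> I (step M c x)" and "I c0"
    and harmonic: "\<And>c. I c \<Longrightarrow> snd c \<noteq> [] \<Longrightarrow> \<phi> c = p * \<phi> (step M c True) + (1 - p) * \<phi> (step M c False)"
    and boundary: "\<And>c. I c \<Longrightarrow> snd c = [] \<Longrightarrow> \<phi> c = of_bool (halted_in F c)"
    and bounded: "\<And>c. I c \<Longrightarrow> \<bar>\<phi> c\<bar> \<le> B"
    and halts: "(\<lambda>n. run_expect M p n c0 (\<lambda>c. of_bool (snd c \<noteq> []))) \<longlonglongrightarrow> 0"
  shows "(\<lambda>n. run_expect M p n c0 (\<lambda>c. of_bool (halted_in F c))) \<longlonglongrightarrow> \<phi> c0"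
proof -
  let ?ind = "\<lambda>c. of_bool (halted_in F c) :: real"
  have B: "0 \<le> B" using bounded[OF \<open>I c0\<close>] by linarith
  have pointwise: "\<bar>\<phi> c - ?ind c\<bar> \<le> (B + 1) * of_bool (snd c \<noteq> [])" if "I c" for c
    using boundary[OF that] bounded[OF that] by (cases "snd c = []") (auto simp: halted_in_def)
  have bound: "\<forall>n. norm (\<phi> c0 - run_expect M p n c0 ?ind) \<le> (B + 1) * run_expect M p n c0 (\<lambda>c. of_bool (snd c \<noteq> []))"
  proof
    fix n
    have "\<phi> c0 - run_expect M p n c0 ?ind = run_expect M p n c0 (\<lambda>c. \<phi> c - ?ind c)"
      using run_expect_harmonic[OF closed harmonic \<open>I c0\<close>] by (simp add: run_expect_diff)
    also have "\<bar>\<dots>\<bar> \<le> run_expect M p n c0 (\<lambda>c. \<bar>\<phi> c - ?ind c\<bar>)"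
      by (rule run_expect_abs_le[OF p])
    also have "\<dots> \<le> run_expect M p n c0 (\<lambda>c. (B + 1) * of_bool (snd c \<noteq> []))"
      using pointwise run_preserves[OF closed \<open>I c0\<close>] by (intro run_expect_mono p) auto
    finally show "norm (\<phi> c0 - run_expect M p n c0 ?ind) \<le> (B + 1) * run_expect M p n c0 (\<lambda>c. of_bool (snd c \<noteq> []))"
      by (simp add: run_expect_cmult)
  qed
  have "(\<lambda>n. (B + 1) * run_expect M p n c0 (\<lambda>c. of_bool (snd c \<noteq> []))) \<longlonglongrightarrow> 0"
    using tendsto_mult_right_zero[OF halts] .
  then have "(\<lambda>n. \<phi> c0 - run_expect M p n c0 ?ind) \<longlonglongrightarrow> 0"
    by (rule Lim_null_comparison[OF always_eventually[OF bound]])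
  from tendsto_diff[OF tendsto_const[of "\<phi> c0"] this] show ?thesis by simp
qed

lemma stack_height_run:
  assumes closed: "\<And>c x. I c \<Longrightarrow> I (step M c x)"
    and grow: "\<And>c x. I c \<Longrightarrow> length (snd (step M c x)) \<le> Suc (length (snd c))"
    and "I c"
  shows "length (snd (run M c w)) \<le> length (snd c) + length w"
  using \<open>I c\<close>
proof (induction w arbitrary: c)
  case (Cons x w)
  have "length (snd (run M (step M c x) w)) \<le> length (snd (step M c x)) + length w"
    using Cons.IH[OF closed[OF Cons.prems]] .
  then show ?case using grow[OF Cons.prems, of x] by (simp add: run_Cons)
qed simp

lemma run_expect_not_doomed_le:
  assumes p: "0 \<le> p" "p \<le> 1" and \<delta>: "\<delta> \<le> 1"
    and closed: "\<And>c x. I c \<Longrightarrow> I (step M c x)" and "I c0"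
    and doomed_closed: "\<And>c x. I c \<Longrightarrow> D c \<Longrightarrow> D (step M c x)"
    and reach: "\<And>c. I c \<Longrightarrow> \<not> D c \<Longrightarrow> \<delta> \<le> run_expect M p m c (\<lambda>c. of_bool (D c))"
  shows "run_expect M p (j * m) c0 (\<lambda>c. of_bool (\<not> D c)) \<le> (1 - \<delta>) ^ j"
proof (induction j)
  case (Suc j)
  have one_round: "run_expect M p m c (\<lambda>c. of_bool (\<not> D c)) \<le> (1 - \<delta>) * of_bool (\<not> D c)" if "I c" for c
  proof (cases "D c")
    case True
    have "D (run M c w)" for w
      using run_preserves[of "\<lambda>c. I c \<and> D c"] closed doomed_closed \<open>I c\<close> True by blast
    then show ?thesis using True by (simp add: run_expect_cong[where g = "\<lambda>_. 0"])
  next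
    case False
    have "run_expect M p m c (\<lambda>c. of_bool (\<not> D c)) = 1 - run_expect M p m c (\<lambda>c. of_bool (D c))"
      using run_expect_diff[of M p m c "\<lambda>_. 1" "\<lambda>c. of_bool (D c)"] by (simp add: of_bool_not_iff)
    then show ?thesis using reach[OF that False] False by simp
  qed
  have "run_expect M p (Suc j * m) c0 (\<lambda>c. of_bool (\<not> D c)) =
      run_expect M p (j * m) c0 (\<lambda>c. run_expect M p m c (\<lambda>c. of_bool (\<not> D c)))"
    by (simp add: run_expect_add[symmetric] add.commute)
  also have "\<dots> \<le> run_expect M p (j * m) c0 (\<lambda>c. (1 - \<delta>) * of_bool (\<not> D c))"
    using one_round run_preserves[OF closed \<open>I c0\<close>] by (intro run_expect_mono p) auto
  also have "\<dots> \<le> (1 - \<delta>) * (1 - \<delta>) ^ j"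
    unfolding run_expect_cmult using Suc.IH \<delta> by (intro mult_left_mono) auto
  finally show ?case by simp
qed simp

text \<open>After \<open>j m\<close> steps the machine is doomed except with probability \<open>(1 - \<delta>) ^ j\<close>, and then it
  halts within the height of its stack, which has grown by at most one per step.\<close>

lemma run_expect_running_le:
  assumes p: "0 \<le> p" "p \<le> 1" and \<delta>: "\<delta> \<le> 1"
    and closed: "\<And>c x. I c \<Longrightarrow> I (step M c x)" and "I c0"
    and doomed_closed: "\<And>c x. I c \<Longrightarrow> D c \<Longrightarrow> D (step M c x)"
    and reach: "\<And>c. I c \<Longrightarrow> \<not> D c \<Longrightarrow> \<delta> \<le> run_expect M p m c (\<lambda>c. of_bool (D c))"
    and drain: "\<And>c w. I c \<Longrightarrow> D c \<Longrightarrow> length (snd c) \<le> length w \<Longrightarrow> snd (run M c w) = []"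
    and grow: "\<And>c x. I c \<Longrightarrow> length (snd (step M c x)) \<le> Suc (length (snd c))"
    and n: "2 * j * m + length (snd c0) \<le> n"
  shows "run_expect M p n c0 (\<lambda>c. of_bool (snd c \<noteq> [])) \<le> (1 - \<delta>) ^ j"
proof -
  let ?running = "\<lambda>c. of_bool (snd c \<noteq> []) :: real"
  have "run_expect M p n c0 ?running = run_expect M p (j * m) c0 (\<lambda>c. run_expect M p (n - j * m) c ?running)"
    using n by (simp add: run_expect_add[symmetric])
  also have "\<dots> \<le> run_expect M p (j * m) c0 (\<lambda>c. of_bool (\<not> D c))"
  proof (intro run_expect_mono p)
    fix w :: "bool list" assume w: "length w = j * m"
    let ?c = "run M c0 w"
    have "I ?c" using run_preserves[OF closed \<open>I c0\<close>] .
    show "run_expect M p (n - j * m) ?c ?running \<le> of_bool (\<not> D ?c)"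
    proof (cases "D ?c")
      case True
      have "length (snd ?c) \<le> n - j * m"
        using stack_height_run[OF closed grow \<open>I c0\<close>, of w] w n by simp
      then have "run_expect M p (n - j * m) ?c ?running = 0"
        using drain[OF \<open>I ?c\<close> True] by (simp add: run_expect_cong[where g = "\<lambda>_. 0"])
      then show ?thesis by simp
    next
      case False
      have "run_expect M p (n - j * m) ?c ?running \<le> run_expect M p (n - j * m) ?c (\<lambda>_. 1)"
        by (intro run_expect_mono p) simp
      then show ?thesis using False by simp
    qed
  qed
  also have "\<dots> \<le> (1 - \<delta>) ^ j"
    by (rule run_expect_not_doomed_le[OF p \<delta> closed \<open>I c0\<close> doomed_closed reach])
  finally show ?thesis .
qed

lemma run_expect_running_tendsto_0:
  assumes p: "0 \<le> p" "p \<le> 1" and \<delta>: "0 < \<delta>" "\<delta> \<le> 1"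
    and closed: "\<And>c x. I c \<Longrightarrow> I (step M c x)" and "I c0"
    and doomed_closed: "\<And>c x. I c \<Longrightarrow> D c \<Longrightarrow> D (step M c x)"
    and reach: "\<And>c. I c \<Longrightarrow> \<not> D c \<Longrightarrow> \<delta> \<le> run_expect M p m c (\<lambda>c. of_bool (D c))"
    and drain: "\<And>c w. I c \<Longrightarrow> D c \<Longrightarrow> length (snd c) \<le> length w \<Longrightarrow> snd (run M c w) = []"
    and grow: "\<And>c x. I c \<Longrightarrow> length (snd (step M c x)) \<le> Suc (length (snd c))"
  shows "(\<lambda>n. run_expect M p n c0 (\<lambda>c. of_bool (snd c \<noteq> []))) \<longlonglongrightarrow> 0"
proof (rule LIMSEQ_I)
  fix r :: real assume "0 < r"
  have "(\<lambda>j. (1 - \<delta>) ^ j) \<longlonglongrightarrow> 0"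
    by (rule LIMSEQ_power_zero) (use \<delta> in auto)
  then obtain j where j: "(1 - \<delta>) ^ j < r"
    using LIMSEQ_D[OF _ \<open>0 < r\<close>] \<delta> by fastforce
  have "norm (run_expect M p n c0 (\<lambda>c. of_bool (snd c \<noteq> [])) - 0) < r"
    if "2 * j * m + length (snd c0) \<le> n" for n
    using run_expect_running_le[OF p \<delta>(2) closed \<open>I c0\<close> doomed_closed reach drain grow that] j
      run_expect_nonneg[OF p, of "\<lambda>c. of_bool (snd c \<noteq> [])" M n c0]
    by simp
  then show "\<exists>n0. \<forall>n\<ge>n0. norm (run_expect M p n c0 (\<lambda>c. of_bool (snd c \<noteq> [])) - 0) < r"
    by blast
qed

lemma prefix_free_pda_lang: "prefix_free (pda_lang M F)"
  unfolding prefix_free_def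
proof (intro ballI impI)
  fix u v assume u: "u \<in> pda_lang M F" and v: "v \<in> pda_lang M F" and "\<exists>z. v = u @ z"
  then obtain z where z: "v = u @ z" by blast
  show "u = v"
  proof (rule ccontr)
    assume "u \<noteq> v"
    then have "length u < length v" using z by simp
    then have "snd (run M (start M, init_stack M) (take (length u) v)) \<noteq> []"
      using v by (simp add: pda_lang_def)
    then show False using u z by (simp add: pda_lang_def)
  qed
qed

lemma pda_lang_Un: "pda_lang M A \<union> pda_lang M B = pda_lang M (A \<union> B)"
  unfolding pda_lang_def by auto

lemma pda_lang_disjoint: "A \<inter> B = {} \<Longrightarrow> pda_lang M A \<inter> pda_lang M B = {}"
  unfolding pda_lang_def by auto

lemma pda_simulatesI:
  assumes "out0 M \<inter> out1 M = {}"
    and "\<And>p. p \<in> D \<Longrightarrow> Plang p (pda_lang M (out0 M \<union> out1 M)) = 1"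
    and "\<And>p. p \<in> D \<Longrightarrow> Plang p (pda_lang M (out1 M)) = f p"
  shows "pda_simulates M f D"
  using assms by (simp add: pda_simulates_def is_simulation_def pda_lang_Un pda_lang_disjoint prefix_free_pda_lang)

definition swap_outputs :: "pda \<Rightarrow> pda" where
  "swap_outputs M = M\<lparr>out0 := out1 M, out1 := out0 M\<rparr>"

lemma run_swap_outputs: "run (swap_outputs M) c w = run M c w"
proof (induction w arbitrary: c)
  case (Cons x w)
  then show ?case by (cases c; cases "snd c") (simp_all add: swap_outputs_def)
qed simp

lemma out_swap_outputs [simp]: "out0 (swap_outputs M) = out1 M" "out1 (swap_outputs M) = out0 M"
  by (simp_all add: swap_outputs_def)

lemma pda_lang_swap_outputs: "pda_lang (swap_outputs M) F = pda_lang M F"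
  unfolding pda_lang_def run_swap_outputs by (simp add: swap_outputs_def)

lemma wf_pda_swap_outputs: "wf_pda M \<Longrightarrow> wf_pda (swap_outputs M)"
  unfolding wf_pda_def swap_outputs_def by auto

lemma pda_simulates_swap_outputs:
  assumes "pda_simulates M f D"
  shows "pda_simulates (swap_outputs M) (\<lambda>p. 1 - f p) D"
proof -
  let ?L0 = "pda_lang M (out0 M)" and ?L1 = "pda_lang M (out1 M)"
  have "Plang p ?L0 = 1 - f p" if "p \<in> D" for p
  proof -
    have total: "infsum (Pword p) (?L0 \<union> ?L1) = 1" and one: "infsum (Pword p) ?L1 = f p"
      using assms that by (auto simp: pda_simulates_def is_simulation_def Plang_def)
    then have summable: "Pword p summable_on (?L0 \<union> ?L1)"
      by (metis infsum_not_exists zero_neq_one)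
    have "?L0 \<inter> ?L1 = {}"
      using assms by (simp add: pda_simulates_def is_simulation_def)
    then have "infsum (Pword p) (?L0 \<union> ?L1) = infsum (Pword p) ?L0 + infsum (Pword p) ?L1"
      using summable_on_subset_banach[OF summable Un_upper1] summable_on_subset_banach[OF summable Un_upper2]
      by (rule infsum_Un_disjoint[rotated 2])
    then show ?thesis using total one by (simp add: Plang_def)
  qed
  then show ?thesis
    using assms by (auto simp: pda_simulates_def is_simulation_def pda_lang_swap_outputs Un_commute)
qed

section \<open>A counter automaton\<close>

declare replicate_Suc [simp del]

datatype verdict = Pop | Push | Reject | Retry

lemma UNIV_verdict: "(UNIV :: verdict set) = {Pop, Push, Reject, Retry}"
  using verdict.exhaust by auto

instance verdict :: finite
  by standard (simp add: UNIV_verdict)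

definition prefix_state :: "bool list \<Rightarrow> nat" where
  "prefix_state u = Suc (to_nat u)"

lemma prefix_state_neq_0 [simp]: "prefix_state u \<noteq> 0"
  by (simp add: prefix_state_def)

lemma prefix_state_eq_iff [simp]: "prefix_state u = prefix_state v \<longleftrightarrow> u = v"
  by (simp add: prefix_state_def)

lemma from_nat_prefix_state [simp]: "from_nat (prefix_state u - Suc 0) = u"
  by (simp add: prefix_state_def)

text \<open>State \<open>0\<close> empties the stack and then outputs 0; state \<^term>\<open>prefix_state u\<close> remembers the
  bits \<open>u\<close> of the current block read so far.\<close>

definition counter_move :: "nat \<Rightarrow> (bool list \<Rightarrow> verdict) \<Rightarrow> nat \<Rightarrow> bool \<Rightarrow> nat \<times> nat list" where
  "counter_move N dec s x =
     (if s = 0 then (0, [])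
      else let u = from_nat (s - 1) @ [x] in
        if length u < N then (prefix_state u, [0])
        else case dec u of
          Pop \<Rightarrow> (prefix_state [], [])
        | Push \<Rightarrow> (prefix_state [], [0, 0])
        | Reject \<Rightarrow> (0, [])
        | Retry \<Rightarrow> (prefix_state [], [0]))"

definition counter_pda :: "nat \<Rightarrow> (bool list \<Rightarrow> verdict) \<Rightarrow> pda" where
  "counter_pda N dec =
     \<lparr>states = insert 0 (prefix_state ` {u. length u < N}), start = prefix_state [],
      stack_alph = {0}, init_stack = [0],
      trans_state = (\<lambda>s x b. fst (counter_move N dec s x)),
      trans_push = (\<lambda>s x b. snd (counter_move N dec s x)),
      out0 = {0}, out1 = {prefix_state []}\<rparr>"

lemma wf_counter_pda: "0 < N \<Longrightarrow> wf_pda (counter_pda N dec)"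
proof -
  assume "0 < N"
  have "finite (prefix_state ` {u :: bool list. length u < N})"
    using finite_bounded_length[of UNIV "N - 1"] \<open>0 < N\<close>
    by (intro finite_imageI) (auto elim: finite_subset[rotated])
  moreover have "fst (counter_move N dec s x) \<in> insert 0 (prefix_state ` {u. length u < N})"
    and "set (snd (counter_move N dec s x)) \<subseteq> {0}" for s x
    using \<open>0 < N\<close> by (auto simp: counter_move_def Let_def split: verdict.splits)
  ultimately show ?thesis
    using \<open>0 < N\<close> by (auto simp: wf_pda_def counter_pda_def)
qed

definition block_result :: "verdict \<Rightarrow> nat \<Rightarrow> config" where
  "block_result v k = (case v of
       Pop \<Rightarrow> (prefix_state [], replicate (k - 1) 0)
     | Push \<Rightarrow> (prefix_state [], replicate (Suc k) 0)
     | Reject \<Rightarrow> (0, replicate (k - 1) 0)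
     | Retry \<Rightarrow> (prefix_state [], replicate k 0))"

lemma step_counter_draining: "step (counter_pda N dec) (0, replicate (Suc k) 0) x = (0, replicate k 0)"
  by (simp add: step_def counter_pda_def counter_move_def replicate_Suc)

lemma step_counter_reading:
  "step (counter_pda N dec) (prefix_state u, replicate (Suc k) 0) x =
     (if length (u @ [x]) < N then (prefix_state (u @ [x]), replicate (Suc k) 0)
      else block_result (dec (u @ [x])) (Suc k))"
  by (cases "dec (u @ [x])") (simp_all add: step_def counter_pda_def counter_move_def block_result_def replicate_Suc)

lemma run_counter_block:
  assumes "length u < N" "length u + length v = N"
  shows "run (counter_pda N dec) (prefix_state u, replicate (Suc k) 0) v = block_result (dec (u @ v)) (Suc k)"
  using assms
proof (induction v arbitrary: u)
  case (Cons x v)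
  show ?case
  proof (cases "length (u @ [x]) < N")
    case True
    then show ?thesis using Cons.IH[of "u @ [x]"] Cons.prems by (simp add: run_Cons step_counter_reading)
  next
    case False
    then have "v = []" using Cons.prems by auto
    then show ?thesis using False by (simp add: run_Cons step_counter_reading)
  qed
qed simp

definition counter_config :: "nat \<Rightarrow> config \<Rightarrow> bool" where
  "counter_config N c \<longleftrightarrow>
     (\<exists>u k. length u < N \<and> c = (prefix_state u, replicate (Suc k) 0)) \<or>
     c = (prefix_state [], []) \<or> (\<exists>k. c = (0, replicate k 0))"

lemma counter_config_cases:
  assumes "counter_config N c"
  obtains (reading) u k where "length u < N" "c = (prefix_state u, replicate (Suc k) 0)"
    | (accepted) "c = (prefix_state [], [])"
    | (draining) k where "c = (0, replicate (Suc k) 0)"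
    | (rejected) "c = (0, [])"
  using assms unfolding counter_config_def by (metis replicate_0 not0_implies_Suc)

lemma counter_config_start: "0 < N \<Longrightarrow> counter_config N (prefix_state [], replicate k 0)"
  by (cases k) (auto simp: counter_config_def)

lemma counter_config_block_result:
  assumes "0 < N"
  shows "counter_config N (block_result v k)"
proof -
  have "counter_config N (0, replicate j 0)" for j
    by (simp add: counter_config_def)
  then show ?thesis
    using counter_config_start[OF assms] by (cases v) (simp_all add: block_result_def)
qed

lemma counter_config_step:
  assumes "0 < N" "counter_config N c"
  shows "counter_config N (step (counter_pda N dec) c x)"
  using assms(2)
proof (cases rule: counter_config_cases)
  case (reading u k)
  then show ?thesis
    using assms(1) counter_config_block_result by (auto simp: step_counter_reading counter_config_def)
next
  case (draining k)
  then show ?thesis by (auto simp: step_counter_draining counter_config_def)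
qed (auto simp: counter_config_def)

lemma stack_height_counter_step:
  "counter_config N c \<Longrightarrow> length (snd (step (counter_pda N dec) c x)) \<le> Suc (length (snd c))"
  by (erule counter_config_cases)
    (auto simp: step_counter_draining step_counter_reading block_result_def split: verdict.splits)

definition verdict_prob :: "nat \<Rightarrow> (bool list \<Rightarrow> verdict) \<Rightarrow> real \<Rightarrow> verdict \<Rightarrow> real" where
  "verdict_prob N dec p v = (\<Sum>w | w \<in> words N \<and> dec w = v. Pword p w)"

lemma verdict_prob_altdef:
  "verdict_prob N dec p v = (\<Sum>w\<in>words N. if dec w = v then Pword p w else 0)"
  by (simp add: verdict_prob_def sum.inter_filter)

lemma sum_words_by_verdict:
  "(\<Sum>w\<in>words N. Pword p w * g (dec w)) = (\<Sum>v\<in>UNIV. g v * verdict_prob N dec p v)"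
proof -
  have "(\<Sum>w\<in>words N. Pword p w * g (dec w)) = (\<Sum>v\<in>UNIV. \<Sum>w | w \<in> words N \<and> dec w = v. Pword p w * g (dec w))"
    by (rule sum.group[symmetric]) auto
  also have "\<dots> = (\<Sum>v\<in>UNIV. g v * verdict_prob N dec p v)"
    by (simp add: verdict_prob_def sum_distrib_left mult.commute)
  finally show ?thesis .
qed

lemma sum_verdict_prob: "(\<Sum>v\<in>UNIV. verdict_prob N dec p v) = 1"
  using sum_words_by_verdict[where g = "\<lambda>_. 1"] by (simp add: sum_Pword_words)

lemma verdict_prob_nonneg: "0 \<le> p \<Longrightarrow> p \<le> 1 \<Longrightarrow> 0 \<le> verdict_prob N dec p v"
  unfolding verdict_prob_def by (intro sum_nonneg Pword_nonneg)

lemma verdict_prob_le_1: "0 \<le> p \<Longrightarrow> p \<le> 1 \<Longrightarrow> verdict_prob N dec p v \<le> 1"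
  using member_le_sum[of v UNIV "verdict_prob N dec p"] by (simp add: verdict_prob_nonneg sum_verdict_prob)

text \<open>First-step equation for the probability \<open>y\<close> that the counter ever drops by one; from
  height \<open>k\<close> it then reaches 0 with probability \<open>y ^ k\<close>.\<close>

definition descent_eq :: "nat \<Rightarrow> (bool list \<Rightarrow> verdict) \<Rightarrow> real \<Rightarrow> real \<Rightarrow> bool" where
  "descent_eq N dec p y \<longleftrightarrow>
     y = verdict_prob N dec p Pop + verdict_prob N dec p Push * y\<^sup>2 + verdict_prob N dec p Retry * y"

lemma descent_eq_iff:
  "descent_eq N dec p y \<longleftrightarrow>
     y * (verdict_prob N dec p Pop + verdict_prob N dec p Push + verdict_prob N dec p Reject) =
     verdict_prob N dec p Pop + verdict_prob N dec p Push * y\<^sup>2"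
proof -
  have Retry: "verdict_prob N dec p Retry =
      1 - verdict_prob N dec p Pop - verdict_prob N dec p Push - verdict_prob N dec p Reject"
    using sum_verdict_prob[of N dec p] unfolding UNIV_verdict by simp
  show ?thesis
    unfolding descent_eq_def Retry by (auto simp: algebra_simps)
qed

definition potential :: "real \<Rightarrow> config \<Rightarrow> real" where
  "potential y c = (if fst c = 0 then 0 else y ^ length (snd c))"

lemma run_expect_block_potential:
  assumes "0 < N" "descent_eq N dec p y"
  shows "run_expect (counter_pda N dec) p N (prefix_state [], replicate (Suc k) 0) (potential y) = y ^ Suc k"
proof -
  have "run_expect (counter_pda N dec) p N (prefix_state [], replicate (Suc k) 0) (potential y) =
      (\<Sum>w\<in>words N. Pword p w * potential y (block_result (dec w) (Suc k)))"
    unfolding run_expect_def using run_counter_block[of "[]" N] assms(1)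
    by (intro sum.cong) (auto simp: words_def)
  also have "\<dots> = y ^ k * (verdict_prob N dec p Pop + verdict_prob N dec p Push * y\<^sup>2 + verdict_prob N dec p Retry * y)"
    unfolding sum_words_by_verdict[where g = "\<lambda>v. potential y (block_result v (Suc k))"]
    by (simp add: UNIV_verdict block_result_def potential_def algebra_simps power2_eq_square)
  also have "\<dots> = y ^ Suc k"
    by (simp only: descent_eq_def[THEN iffD1, OF assms(2), symmetric] power_Suc2)
  finally show ?thesis .
qed

definition doomed :: "config \<Rightarrow> bool" where
  "doomed c \<longleftrightarrow> fst c = 0 \<or> snd c = []"

lemma doomed_step: "counter_config N c \<Longrightarrow> doomed c \<Longrightarrow> doomed (step (counter_pda N dec) c x)"
  by (erule counter_config_cases) (auto simp: doomed_def step_counter_draining)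

lemma doomed_run:
  assumes "0 < N" "counter_config N c" "doomed c"
  shows "doomed (run (counter_pda N dec) c w)"
  using run_preserves[of "\<lambda>c. counter_config N c \<and> doomed c"] assms counter_config_step doomed_step
  by blast

lemma doomed_run_halted:
  "counter_config N c \<Longrightarrow> doomed c \<Longrightarrow> length (snd c) \<le> length w \<Longrightarrow> snd (run (counter_pda N dec) c w) = []"
proof (induction w arbitrary: c)
  case (Cons x w)
  from Cons.prems(1) show ?case
  proof (cases rule: counter_config_cases)
    case (draining k)
    have "snd (run (counter_pda N dec) (0, replicate k 0) w) = []"
      using Cons.prems draining by (intro Cons.IH) (auto simp: counter_config_def doomed_def)
    then show ?thesis using draining by (simp add: run_Cons step_counter_draining)
  qed (use Cons.prems in \<open>auto simp: doomed_def\<close>)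
qed simp

lemma doomed_le_run_expect:
  assumes "0 < N" "0 \<le> p" "p \<le> 1" "counter_config N c"
  shows "of_bool (doomed c) \<le> run_expect (counter_pda N dec) p n c (\<lambda>c. of_bool (doomed c))"
proof (cases "doomed c")
  case True
  then show ?thesis
    using doomed_run[OF assms(1,4) True] by (simp add: run_expect_cong[where g = "\<lambda>_. 1"])
qed (simp add: assms run_expect_nonneg)

lemma reject_prob_le_doomed_after_block:
  assumes N: "0 < N" and p: "0 \<le> p" "p \<le> 1" and "N \<le> n"
  shows "verdict_prob N dec p Reject \<le>
    run_expect (counter_pda N dec) p n (prefix_state [], replicate (Suc k) 0) (\<lambda>c. of_bool (doomed c))"
proof -
  let ?M = "counter_pda N dec" and ?c = "(prefix_state [], replicate (Suc k) 0)"
  let ?doomed = "\<lambda>c. of_bool (doomed c) :: real"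
  have "verdict_prob N dec p Reject = (\<Sum>w\<in>words N. if dec w = Reject then Pword p w else 0)"
    by (rule verdict_prob_altdef)
  also have "\<dots> = (\<Sum>w\<in>words N. Pword p w * of_bool (dec w = Reject))"
    by (intro sum.cong) auto
  also have "\<dots> \<le> run_expect ?M p N ?c ?doomed"
    unfolding run_expect_def
  proof (intro sum_mono mult_left_mono)
    fix w assume "w \<in> words N"
    then have "run ?M ?c w = block_result (dec w) (Suc k)"
      using run_counter_block[of "[]" N] N by (simp add: words_def)
    then show "of_bool (dec w = Reject) \<le> ?doomed (run ?M ?c w)"
      by (cases "dec w") (auto simp: doomed_def block_result_def)
  qed (rule Pword_nonneg[OF p])
  also have "\<dots> \<le> run_expect ?M p N ?c (\<lambda>c. run_expect ?M p (n - N) c ?doomed)"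
    using doomed_le_run_expect[OF N p] run_preserves[OF counter_config_step[OF N] counter_config_start[OF N]]
    by (intro run_expect_mono p) auto
  also have "\<dots> = run_expect ?M p n ?c ?doomed"
    using \<open>N \<le> n\<close> by (simp add: run_expect_add[symmetric])
  finally show ?thesis .
qed

lemma reject_prob_le_doomed:
  assumes N: "0 < N" and p: "0 \<le> p" "p \<le> 1" and "counter_config N c" "\<not> doomed c"
  shows "verdict_prob N dec p Reject \<le> run_expect (counter_pda N dec) p (2 * N) c (\<lambda>c. of_bool (doomed c))"
proof -
  let ?M = "counter_pda N dec" and ?doomed = "\<lambda>c. of_bool (doomed c) :: real"
  from assms(4,5) obtain u k where u: "length u < N" and c: "c = (prefix_state u, replicate (Suc k) 0)"
    by (cases rule: counter_config_cases) (auto simp: doomed_def)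
  have le_1: "verdict_prob N dec p Reject \<le> 1"
    by (rule verdict_prob_le_1[OF p])
  define r where "r = N - length u"
  have "verdict_prob N dec p Reject = run_expect ?M p r c (\<lambda>_. verdict_prob N dec p Reject)"
    by simp
  also have "\<dots> \<le> run_expect ?M p r c (\<lambda>c'. run_expect ?M p (2 * N - r) c' ?doomed)"
  proof (intro run_expect_mono p)
    fix w :: "bool list" assume "length w = r"
    then have run: "run ?M c w = block_result (dec (u @ w)) (Suc k)"
      unfolding c using u by (intro run_counter_block) (auto simp: r_def)
    show "verdict_prob N dec p Reject \<le> run_expect ?M p (2 * N - r) (run ?M c w) ?doomed"
    proof (cases "doomed (block_result (dec (u @ w)) (Suc k))")
      case True
      then have "1 \<le> run_expect ?M p (2 * N - r) (block_result (dec (u @ w)) (Suc k)) ?doomed"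
        using doomed_le_run_expect[where dec = dec and n = "2 * N - r",
            OF N p counter_config_block_result[OF N, of "dec (u @ w)" "Suc k"]] by simp
      then show ?thesis unfolding run using le_1 by linarith
    next
      case False
      have "\<exists>j. block_result (dec (u @ w)) (Suc k) = (prefix_state [], replicate (Suc j) 0)"
        using False by (cases "dec (u @ w)"; cases k) (auto simp: block_result_def doomed_def)
      then obtain j where "block_result (dec (u @ w)) (Suc k) = (prefix_state [], replicate (Suc j) 0)" ..
      then show ?thesis
        unfolding run using reject_prob_le_doomed_after_block[OF N p] by (simp add: r_def)
    qed
  qed
  also have "\<dots> = run_expect ?M p (2 * N) c ?doomed"
    by (simp add: run_expect_add[symmetric] r_def)
  finally show ?thesis .
qed

lemma counter_pda_halts:
  assumes N: "0 < N" and p: "0 \<le> p" "p \<le> 1" and reject: "0 < verdict_prob N dec p Reject"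
  shows "(\<lambda>n. run_expect (counter_pda N dec) p n (prefix_state [], [0]) (\<lambda>c. of_bool (snd c \<noteq> []))) \<longlonglongrightarrow> 0"
proof (rule run_expect_running_tendsto_0[where I = "counter_config N" and D = doomed and m = "2 * N"])
  show "verdict_prob N dec p Reject \<le> 1"
    by (rule verdict_prob_le_1[OF p])
  show "counter_config N (prefix_state [], [0])"
    using counter_config_start[OF N, of 1] by (simp add: replicate_Suc)
qed (use p reject counter_config_step[OF N] doomed_step doomed_run_halted stack_height_counter_step
      reject_prob_le_doomed[OF N p] in auto)

text \<open>By \<open>run_expect_block_potential\<close> this agrees with \<^term>\<open>potential y\<close> at block boundaries,
  which makes it harmonic.\<close>

definition block_value :: "nat \<Rightarrow> (bool list \<Rightarrow> verdict) \<Rightarrow> real \<Rightarrow> real \<Rightarrow> config \<Rightarrow> real" where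
  "block_value N dec p y c =
     (if fst c \<noteq> 0 \<and> snd c \<noteq> []
      then run_expect (counter_pda N dec) p (N - length (from_nat (fst c - 1) :: bool list)) c (potential y)
      else potential y c)"

lemma block_value_start:
  assumes "0 < N" "descent_eq N dec p y"
  shows "block_value N dec p y (prefix_state [], replicate k 0) = y ^ k"
  using run_expect_block_potential[OF assms]
  by (cases k) (simp_all add: block_value_def potential_def replicate_Suc)

lemma block_value_block_result:
  assumes "0 < N" "descent_eq N dec p y"
  shows "block_value N dec p y (block_result v k) = potential y (block_result v k)"
proof -
  have "block_value N dec p y (prefix_state [], replicate j 0) = potential y (prefix_state [], replicate j 0)" for j
    using block_value_start[OF assms] by (simp add: potential_def)
  moreover have "block_value N dec p y (0, xs) = potential y (0, xs)" for xs
    by (simp add: block_value_def)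
  ultimately show ?thesis by (cases v) (simp_all add: block_result_def)
qed

lemma block_value_harmonic:
  assumes N: "0 < N" and eq: "descent_eq N dec p y"
    and "counter_config N c" "snd c \<noteq> []"
  shows "block_value N dec p y c =
    p * block_value N dec p y (step (counter_pda N dec) c True) +
    (1 - p) * block_value N dec p y (step (counter_pda N dec) c False)"
  using assms(3)
proof (cases rule: counter_config_cases)
  case (reading u k)
  let ?M = "counter_pda N dec"
  define r where "r = N - Suc (length u)"
  have "run_expect ?M p r (step ?M c x) (potential y) = block_value N dec p y (step ?M c x)" for x
  proof (cases "length (u @ [x]) < N")
    case True
    then show ?thesis using reading by (simp add: step_counter_reading block_value_def r_def)
  next
    case False
    then have "r = 0" using reading by (simp add: r_def)
    then show ?thesis
      using reading False block_value_block_result[OF N eq] by (simp add: step_counter_reading)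
  qed
  moreover have "block_value N dec p y c = run_expect ?M p (Suc r) c (potential y)"
    using reading by (simp add: block_value_def r_def Suc_diff_Suc replicate_Suc)
  ultimately show ?thesis by (simp add: run_expect_Suc)
next
  case (draining k)
  then show ?thesis by (simp add: block_value_def potential_def step_counter_draining)
qed (use assms(4) in simp_all)

lemma abs_block_value_le_1:
  assumes p: "0 \<le> p" "p \<le> 1" and y: "0 \<le> y" "y \<le> 1"
  shows "\<bar>block_value N dec p y c\<bar> \<le> 1"
proof -
  have potential: "0 \<le> potential y c \<and> potential y c \<le> 1" for c
    using y by (simp add: potential_def power_le_one)
  have "0 \<le> run_expect M p n c (potential y) \<and> run_expect M p n c (potential y) \<le> 1" for M n c
    using run_expect_nonneg[OF p, where f = "potential y"] run_expect_mono[OF p, where f = "potential y" and g = "\<lambda>_. 1"]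
      potential by simp
  then show ?thesis using potential by (simp add: block_value_def)
qed

lemma counter_pda_accept_prob:
  assumes N: "0 < N" and p: "0 \<le> p" "p \<le> 1" and reject: "0 < verdict_prob N dec p Reject"
    and y: "0 \<le> y" "y \<le> 1" and eq: "descent_eq N dec p y"
  shows "Plang p (pda_lang (counter_pda N dec) {prefix_state []}) = y"
    and "Plang p (pda_lang (counter_pda N dec) {0, prefix_state []}) = 1"
proof -
  let ?M = "counter_pda N dec" and ?c0 = "(prefix_state [], [0 :: nat])"
  have start: "(start ?M, init_stack ?M) = ?c0" by (simp add: counter_pda_def)
  have c0: "counter_config N ?c0"
    using counter_config_start[OF N, of 1] by (simp add: replicate_Suc)
  have closed: "\<And>c x. counter_config N c \<Longrightarrow> counter_config N (step ?M c x)"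
    using counter_config_step[OF N] .
  have halted: "c = (prefix_state [], []) \<or> c = (0, [])" if "counter_config N c" "snd c = []" for c
    using that by (cases rule: counter_config_cases) auto
  have "(\<lambda>n. run_expect ?M p n ?c0 (\<lambda>c. of_bool (halted_in {prefix_state []} c))) \<longlonglongrightarrow> block_value N dec p y ?c0"
  proof (rule run_expect_halted_in_tendsto[OF p closed c0 _ _ _ counter_pda_halts[OF N p reject]])
    show "block_value N dec p y c =
        p * block_value N dec p y (step ?M c True) + (1 - p) * block_value N dec p y (step ?M c False)"
      if "counter_config N c" "snd c \<noteq> []" for c
      by (rule block_value_harmonic[OF N eq that])
    show "block_value N dec p y c = of_bool (halted_in {prefix_state []} c)"
      if "counter_config N c" "snd c = []" for c
      using halted[OF that] by (auto simp: block_value_def potential_def halted_in_def)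
    show "\<bar>block_value N dec p y c\<bar> \<le> 1" for c
      by (rule abs_block_value_le_1[OF p y])
  qed
  moreover have "block_value N dec p y ?c0 = y"
    using block_value_start[OF N eq, of 1] by (simp add: replicate_Suc)
  ultimately show "Plang p (pda_lang ?M {prefix_state []}) = y"
    unfolding pda_lang_eq_lang_from start by (intro Plang_lang_from p) simp
  have "(\<lambda>n. run_expect ?M p n ?c0 (\<lambda>c. of_bool (halted_in {0, prefix_state []} c))) \<longlonglongrightarrow> 1"
  proof (rule run_expect_halted_in_tendsto[OF p closed c0 _ _ _ counter_pda_halts[OF N p reject],
        where \<phi> = "\<lambda>_. 1" and B = 1])
    show "(1 :: real) = of_bool (halted_in {0, prefix_state []} c)"
      if "counter_config N c" "snd c = []" for c
      using halted[OF that] by (auto simp: halted_in_def)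
  qed simp_all
  then show "Plang p (pda_lang ?M {0, prefix_state []}) = 1"
    unfolding pda_lang_eq_lang_from start by (intro Plang_lang_from p)
qed

lemma counter_pda_simulates:
  assumes N: "0 < N" and D: "D \<subseteq> {0..1}"
    and reject: "\<And>p. p \<in> D \<Longrightarrow> 0 < verdict_prob N dec p Reject"
    and y: "\<And>p. p \<in> D \<Longrightarrow> 0 \<le> y p \<and> y p \<le> 1"
    and eq: "\<And>p. p \<in> D \<Longrightarrow> descent_eq N dec p (y p)"
  shows "pda_simulates (counter_pda N dec) y D"
proof (rule pda_simulatesI)
  fix p assume "p \<in> D"
  then have p: "0 \<le> p" "p \<le> 1" using D by auto
  have "0 \<le> y p" "y p \<le> 1" using y \<open>p \<in> D\<close> by auto
  note accept = counter_pda_accept_prob[OF N p reject[OF \<open>p \<in> D\<close>] this eq[OF \<open>p \<in> D\<close>]]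
  show "Plang p (pda_lang (counter_pda N dec) (out0 (counter_pda N dec) \<union> out1 (counter_pda N dec))) = 1"
    using accept(2) by (simp add: counter_pda_def insert_commute)
  show "Plang p (pda_lang (counter_pda N dec) (out1 (counter_pda N dec))) = y p"
    using accept(1) by (simp add: counter_pda_def)
qed (simp add: counter_pda_def)

text \<open>With this table, \<open>Pop\<close>, \<open>Push\<close> and \<open>Reject\<close> have probabilities \<open>p (1 - p)\<^sup>2\<close>,
  \<open>p (1 - p)\<close> and \<open>p\<^sup>2 (1 - p)\<close>, and \<open>1 - sqrt p\<close> solves the descent equation.\<close>

definition sqrt_verdict :: "bool list \<Rightarrow> verdict" where
  "sqrt_verdict v =
     (if v = [True, False, False] then Pop
      else if v = [False, True, False] \<or> v = [False, True, True] then Push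
      else if v = [True, True, False] then Reject
      else Retry)"

lemma sum_words_3:
  "(\<Sum>v\<in>words 3. h v) =
     h [True, True, True] + h [True, True, False] + h [True, False, True] + h [True, False, False] +
     h [False, True, True] + h [False, True, False] + h [False, False, True] + h [False, False, False]"
  by (simp add: numeral_eq_Suc sum_words_Suc words_0 add.assoc)

lemma sqrt_simulation: "\<exists>M. wf_pda M \<and> pda_simulates M sqrt {0<..<1}"
proof -
  have "pda_simulates (counter_pda 3 sqrt_verdict) (\<lambda>p. 1 - sqrt p) {0<..<1}"
  proof (rule counter_pda_simulates)
    fix p :: real assume "p \<in> {0<..<1}"
    then have p: "0 < p" "p < 1" by auto
    have prob: "verdict_prob 3 sqrt_verdict p Pop = p * (1 - p) * (1 - p)"
      "verdict_prob 3 sqrt_verdict p Push = p * (1 - p)"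
      "verdict_prob 3 sqrt_verdict p Reject = p * p * (1 - p)"
      unfolding verdict_prob_altdef sum_words_3
      by (simp_all add: sqrt_verdict_def Pword_Cons algebra_simps)
    then show "0 < verdict_prob 3 sqrt_verdict p Reject" using p by simp
    show "0 \<le> 1 - sqrt p \<and> 1 - sqrt p \<le> 1" using p by simp
    define s where "s = sqrt p"
    have "p = s * s" using p by (simp add: s_def)
    then have "(1 - s) * (p * (1 - p) * (1 - p) + p * (1 - p) + p * p * (1 - p)) =
        p * (1 - p) * (1 - p) + p * (1 - p) * (1 - s)\<^sup>2"
      by algebra
    then show "descent_eq 3 sqrt_verdict p (1 - sqrt p)"
      unfolding descent_eq_iff prob s_def .
  qed auto
  from pda_simulates_swap_outputs[OF this]
  have "pda_simulates (swap_outputs (counter_pda 3 sqrt_verdict)) sqrt {0<..<1}"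
    by simp
  moreover have "wf_pda (swap_outputs (counter_pda 3 sqrt_verdict))"
    by (simp add: wf_pda_swap_outputs wf_counter_pda)
  ultimately show ?thesis by blast
qed

section \<open>Bernstein coefficients\<close>

definition bernstein_form :: "nat \<Rightarrow> (nat \<Rightarrow> real) \<Rightarrow> real \<Rightarrow> real" where
  "bernstein_form n a x = (\<Sum>k\<le>n. a k * x ^ k * (1 - x) ^ (n - k))"

lemma bernstein_form_cong:
  "(\<And>k. k \<le> n \<Longrightarrow> a k = b k) \<Longrightarrow> bernstein_form n a x = bernstein_form n b x"
  unfolding bernstein_form_def by simp

lemma bernstein_form_add: "bernstein_form n a x + bernstein_form n b x = bernstein_form n (\<lambda>k. a k + b k) x"
  unfolding bernstein_form_def by (simp add: sum.distrib distrib_right)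

lemma bernstein_form_scale: "c * bernstein_form n a x = bernstein_form n (\<lambda>k. c * a k) x"
  unfolding bernstein_form_def by (simp add: sum_distrib_left mult_ac)

lemma bernstein_form_binomial: "bernstein_form n (\<lambda>k. c * of_nat (n choose k)) x = c"
  using binomial_ring[of x "1 - x" n]
  by (simp add: bernstein_form_def mult.assoc sum_distrib_left[symmetric])

lemma bernstein_form_shift:
  "x ^ i * (1 - x) ^ j * bernstein_form n a x =
     bernstein_form (n + i + j) (\<lambda>k. if i \<le> k \<and> k \<le> i + n then a (k - i) else 0) x"
proof -
  let ?b = "\<lambda>k. if i \<le> k \<and> k \<le> i + n then a (k - i) else 0"
  have "bernstein_form (n + i + j) ?b x = (\<Sum>k\<in>(\<lambda>m. m + i) ` {..n}. ?b k * x ^ k * (1 - x) ^ (n + i + j - k))"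
    unfolding bernstein_form_def
  proof (rule sum.mono_neutral_right)
    show "\<forall>k\<in>{..n + i + j} - (\<lambda>m. m + i) ` {..n}. ?b k * x ^ k * (1 - x) ^ (n + i + j - k) = 0"
    proof
      fix k assume k: "k \<in> {..n + i + j} - (\<lambda>m. m + i) ` {..n}"
      have "\<not> (i \<le> k \<and> k \<le> i + n)"
      proof
        assume "i \<le> k \<and> k \<le> i + n"
        then have "k \<in> (\<lambda>m. m + i) ` {..n}" by (intro image_eqI[of _ _ "k - i"]) auto
        then show False using k by blast
      qed
      then show "?b k * x ^ k * (1 - x) ^ (n + i + j - k) = 0" by auto
    qed
  qed auto
  also have "\<dots> = (\<Sum>m\<le>n. a m * x ^ (m + i) * (1 - x) ^ (n - m + j))"
    by (subst sum.reindex) (auto intro!: sum.cong simp: inj_on_def)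
  also have "\<dots> = x ^ i * (1 - x) ^ j * bernstein_form n a x"
    unfolding bernstein_form_def sum_distrib_left
  proof (intro sum.cong refl)
    fix m assume "m \<in> {..n}"
    show "a m * x ^ (m + i) * (1 - x) ^ (n - m + j) = x ^ i * (1 - x) ^ j * (a m * x ^ m * (1 - x) ^ (n - m))"
      by (simp only: power_add mult_ac)
  qed
  finally show ?thesis by simp
qed

text \<open>The coefficient of \<open>x ^ k * (1 - x) ^ (n - k)\<close> after each monomial \<open>x ^ j\<close> of \<open>F\<close> has been
  multiplied by \<open>(x + (1 - x)) ^ (n - j)\<close>.\<close>

definition bernstein_coeff :: "'a::comm_semiring_1 poly \<Rightarrow> nat \<Rightarrow> nat \<Rightarrow> 'a" where
  "bernstein_coeff F n k = (\<Sum>j\<le>k. coeff F j * of_nat ((n - j) choose (k - j)))"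

lemma bernstein_coeff_pCons_0: "bernstein_coeff (pCons c G) n 0 = c"
  by (simp add: bernstein_coeff_def)

lemma bernstein_coeff_pCons_Suc:
  "bernstein_coeff (pCons c G) (Suc n) (Suc k) = c * of_nat (Suc n choose Suc k) + bernstein_coeff G n k"
  unfolding bernstein_coeff_def by (subst sum.atMost_Suc_shift) (simp del: binomial_Suc_Suc sum.atMost_Suc)

lemma poly_eq_bernstein_form:
  fixes F :: "real poly"
  assumes "degree F \<le> n"
  shows "poly F x = bernstein_form n (bernstein_coeff F n) x"
  using assms
proof (induction F arbitrary: n rule: pCons_induct)
  case 0
  then show ?case by (simp add: bernstein_form_def bernstein_coeff_def)
next
  case (pCons c G)
  show ?case
  proof (cases n)
    case 0
    then have "G = 0" using pCons.prems by (auto simp: degree_pCons_eq_if split: if_splits)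
    then show ?thesis using 0 by (simp add: bernstein_form_def bernstein_coeff_def)
  next
    case (Suc m)
    have "degree G \<le> m" using pCons.prems Suc by (auto simp: degree_pCons_eq_if split: if_splits)
    then have "poly (pCons c G) x = bernstein_form (Suc m) (\<lambda>k. c * of_nat (Suc m choose k)) x +
        x * bernstein_form m (bernstein_coeff G m) x"
      using pCons.IH by (simp add: bernstein_form_binomial)
    also have "x * bernstein_form m (bernstein_coeff G m) x =
        bernstein_form (Suc m) (\<lambda>k. if 1 \<le> k \<and> k \<le> Suc m then bernstein_coeff G m (k - 1) else 0) x"
      using bernstein_form_shift[of x 1 0 m] by simp
    also have "bernstein_form (Suc m) (\<lambda>k. c * of_nat (Suc m choose k)) x + \<dots> =
        bernstein_form (Suc m) (bernstein_coeff (pCons c G) (Suc m)) x"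
      unfolding bernstein_form_add
    proof (rule bernstein_form_cong)
      fix k assume "k \<le> Suc m"
      then show "c * of_nat (Suc m choose k) + (if 1 \<le> k \<and> k \<le> Suc m then bernstein_coeff G m (k - 1) else 0) =
          bernstein_coeff (pCons c G) (Suc m) k"
        by (cases k) (simp_all add: bernstein_coeff_pCons_0 bernstein_coeff_pCons_Suc del: binomial_Suc_Suc)
    qed
    finally show ?thesis using Suc by simp
  qed
qed

definition choose_ratio :: "nat \<Rightarrow> nat \<Rightarrow> nat \<Rightarrow> real" where
  "choose_ratio n k j = real (k choose j) / real (n choose j)"

lemma choose_ratio_Suc:
  assumes "j < n"
  shows "choose_ratio n k (Suc j) = choose_ratio n k j * (real (k - j) / real (n - j))"
proof -
  have absorb: "(m choose Suc j) * Suc j = (m choose j) * (m - j)" for m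
    by (metis binomial_absorb_comp binomial_absorption mult.commute)
  have "choose_ratio n k (Suc j) = (real (k choose Suc j) * Suc j) / (real (n choose Suc j) * Suc j)"
    unfolding choose_ratio_def by simp
  also have "\<dots> = (real (k choose j) * real (k - j)) / (real (n choose j) * real (n - j))"
    unfolding of_nat_mult[symmetric] absorb ..
  finally show ?thesis
    using assms by (simp add: choose_ratio_def)
qed

lemma choose_ratio_factor_bounds:
  assumes "j < n" "k \<le> n"
  shows "0 \<le> real (k - j) / real (n - j)" "real (k - j) / real (n - j) \<le> real k / real n"
    and "real k / real n - real (k - j) / real (n - j) \<le> real j / real n"
proof -
  show "0 \<le> real (k - j) / real (n - j)" by simp
  have "real (k - j) / real (n - j) \<le> real k / real n \<and>
      real k / real n - real (k - j) / real (n - j) \<le> real j / real n"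
  proof (cases "j \<le> k")
    case True
    have nj: "0 < real n - real j" using assms by simp
    have t: "real (k - j) / real (n - j) = (real k - real j) / (real n - real j)"
      using True assms by (simp add: of_nat_diff)
    have "real n * (real k - real j) \<le> real k * (real n - real j)"
      using assms by (simp add: algebra_simps mult_left_mono)
    then have "(real k - real j) / (real n - real j) \<le> real k / real n"
      using assms nj by (simp add: field_simps)
    moreover have "real k / real n - (real k - real j) / (real n - real j) =
        real j * (real n - real k) / (real n * (real n - real j))"
      using assms nj by (simp add: field_simps)
    moreover have "\<dots> \<le> real j * (real n - real j) / (real n * (real n - real j))"
      using True assms nj by (intro divide_right_mono mult_left_mono) auto
    ultimately show ?thesis using nj t by simp
  next
    case False
    then show ?thesis using assms by (simp add: divide_right_mono)
  qed
  then show "real (k - j) / real (n - j) \<le> real k / real n"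
    and "real k / real n - real (k - j) / real (n - j) \<le> real j / real n" by simp_all
qed

lemma choose_ratio_bounds:
  assumes "k \<le> n" "j \<le> n"
  shows "0 \<le> choose_ratio n k j \<and> choose_ratio n k j \<le> (real k / real n) ^ j \<and>
    (real k / real n) ^ j - choose_ratio n k j \<le> real j * real j / real n"
  using assms(2)
proof (induction j)
  case 0
  then show ?case by (simp add: choose_ratio_def)
next
  case (Suc j)
  define x where "x = real k / real n"
  define t where "t = real (k - j) / real (n - j)"
  have "j < n" using Suc.prems by simp
  then have IH: "0 \<le> choose_ratio n k j" "choose_ratio n k j \<le> x ^ j"
      "x ^ j - choose_ratio n k j \<le> real j * real j / real n"
    using Suc.IH unfolding x_def by auto
  have t: "0 \<le> t" "t \<le> x" "x - t \<le> real j / real n"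
    using choose_ratio_factor_bounds[OF \<open>j < n\<close> assms(1)] unfolding x_def t_def by auto
  have x: "0 \<le> x" "x \<le> 1" using assms(1) by (auto simp: x_def divide_le_eq_1)
  have "choose_ratio n k j \<le> 1" using IH x power_le_one[of x j] by linarith
  have "x ^ Suc j - choose_ratio n k j * t = x * (x ^ j - choose_ratio n k j) + choose_ratio n k j * (x - t)"
    by (simp add: algebra_simps)
  also have "\<dots> \<le> (x ^ j - choose_ratio n k j) + (x - t)"
    using x IH t \<open>choose_ratio n k j \<le> 1\<close> by (intro add_mono) (simp_all add: mult_left_le_one_le)
  also have "\<dots> \<le> real j * real j / real n + real j / real n"
    using IH t by linarith
  also have "\<dots> \<le> real (Suc j) * real (Suc j) / real n"
    by (simp add: add_divide_distrib[symmetric] divide_right_mono algebra_simps)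
  finally have "x ^ Suc j - choose_ratio n k j * t \<le> real (Suc j) * real (Suc j) / real n" .
  moreover have "choose_ratio n k (Suc j) = choose_ratio n k j * t"
    unfolding t_def by (rule choose_ratio_Suc[OF \<open>j < n\<close>])
  moreover have "choose_ratio n k j * t \<le> x ^ j * x"
    using IH t x by (intro mult_mono) auto
  ultimately show ?case
    using IH t by (simp add: x_def mult.commute)
qed

lemma bernstein_coeff_eq_choose_ratio:
  fixes H :: "real poly"
  assumes "k \<le> n"
  shows "bernstein_coeff H n k = real (n choose k) * (\<Sum>j\<le>degree H. coeff H j * choose_ratio n k j)"
proof -
  have "bernstein_coeff H n k = (\<Sum>j\<le>k. coeff H j * (real (n choose k) * choose_ratio n k j))"
    unfolding bernstein_coeff_def
  proof (intro sum.cong refl)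
    fix j assume "j \<in> {..k}"
    then have "j \<le> k" by simp
    have "real (n choose k) * real (k choose j) = real (n choose j) * real ((n - j) choose (k - j))"
      using choose_mult[OF \<open>j \<le> k\<close> assms] by (metis of_nat_mult)
    moreover have "real (n choose j) > 0" using \<open>j \<le> k\<close> assms by simp
    ultimately show "coeff H j * of_nat ((n - j) choose (k - j)) = coeff H j * (real (n choose k) * choose_ratio n k j)"
      unfolding choose_ratio_def by (simp add: field_simps)
  qed
  also have "\<dots> = real (n choose k) * (\<Sum>j\<le>max k (degree H). coeff H j * choose_ratio n k j)"
    by (simp add: sum_distrib_left mult_ac, rule sum.mono_neutral_left) (auto simp: choose_ratio_def binomial_eq_0)
  also have "(\<Sum>j\<le>max k (degree H). coeff H j * choose_ratio n k j) = (\<Sum>j\<le>degree H. coeff H j * choose_ratio n k j)"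
    by (rule sum.mono_neutral_right) (auto simp: coeff_eq_0)
  finally show ?thesis .
qed

lemma choose_ratio_sum_approx:
  fixes H :: "real poly"
  assumes "k \<le> n" "degree H \<le> n"
  shows "\<bar>(\<Sum>j\<le>degree H. coeff H j * choose_ratio n k j) - poly H (real k / real n)\<bar> \<le>
    (\<Sum>j\<le>degree H. \<bar>coeff H j\<bar> * (real j * real j)) / real n"
proof -
  let ?x = "real k / real n"
  have "\<bar>(\<Sum>j\<le>degree H. coeff H j * choose_ratio n k j) - poly H ?x\<bar> =
      \<bar>\<Sum>j\<le>degree H. coeff H j * (choose_ratio n k j - ?x ^ j)\<bar>"
    by (simp add: poly_altdef sum_subtractf algebra_simps)
  also have "\<dots> \<le> (\<Sum>j\<le>degree H. \<bar>coeff H j\<bar> * (real j * real j / real n))"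
  proof (rule order_trans[OF sum_abs sum_mono])
    fix j assume "j \<in> {..degree H}"
    then have "\<bar>choose_ratio n k j - ?x ^ j\<bar> \<le> real j * real j / real n"
      using choose_ratio_bounds[OF assms(1), of j] assms(2) by (simp add: abs_le_iff)
    from mult_left_mono[OF this abs_ge_zero[of "coeff H j"]]
    show "\<bar>coeff H j * (choose_ratio n k j - ?x ^ j)\<bar> \<le> \<bar>coeff H j\<bar> * (real j * real j / real n)"
      by (simp add: abs_mult)
  qed
  finally show ?thesis by (simp add: sum_divide_distrib)
qed

text \<open>Bernstein and Polya: the coefficient is \<open>n choose k\<close> times a sum that differs from
  \<open>H (k / n)\<close> by \<open>O(1 / n)\<close>.\<close>

lemma bernstein_coeff_nonneg_eventually:
  fixes H :: "real poly"
  assumes pos: "\<And>x. 0 \<le> x \<Longrightarrow> x \<le> 1 \<Longrightarrow> 0 < poly H x"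
  shows "\<exists>n0. \<forall>n\<ge>n0. \<forall>k\<le>n. 0 \<le> bernstein_coeff H n k"
proof -
  have "continuous_on {0..1::real} (poly H)" by (intro continuous_intros)
  then obtain x0 where x0: "x0 \<in> {0..1}" "\<And>x. x \<in> {0..1} \<Longrightarrow> poly H x0 \<le> poly H x"
    using continuous_attains_inf[of "{0..1::real}" "poly H"] by auto
  define m where "m = poly H x0"
  have "0 < m" using pos x0 by (simp add: m_def)
  define C where "C = (\<Sum>j\<le>degree H. \<bar>coeff H j\<bar> * (real j * real j))"
  show ?thesis
  proof (intro exI allI impI)
    fix n k assume n: "Suc (degree H) + nat \<lceil>C / m\<rceil> \<le> n" and "k \<le> n"
    then have "degree H \<le> n" "0 < n" by auto
    have "C / m < real n" using n by linarith
    then have "C / real n < m" using \<open>0 < n\<close> \<open>0 < m\<close> by (simp add: field_simps)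
    moreover have "real k / real n \<in> {0..1}"
      using \<open>k \<le> n\<close> \<open>0 < n\<close> by simp
    then have "m \<le> poly H (real k / real n)"
      using x0 unfolding m_def by blast
    ultimately have "0 \<le> (\<Sum>j\<le>degree H. coeff H j * choose_ratio n k j)"
      using choose_ratio_sum_approx[OF \<open>k \<le> n\<close> \<open>degree H \<le> n\<close>] unfolding C_def[symmetric]
      by (simp add: abs_le_iff)
    then show "0 \<le> bernstein_coeff H n k"
      by (simp add: bernstein_coeff_eq_choose_ratio[OF \<open>k \<le> n\<close>])
  qed
qed

section \<open>Verdict tables with polynomial probabilities\<close>

abbreviation of_rat_poly :: "rat poly \<Rightarrow> real poly" where
  "of_rat_poly \<equiv> map_poly of_rat"

lemma of_rat_poly_mult: "of_rat_poly (p * q) = of_rat_poly p * of_rat_poly q"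
  by (rule poly_eqI) (simp add: coeff_map_poly coeff_mult of_rat_sum of_rat_mult)

lemma of_rat_poly_power: "of_rat_poly (p ^ n) = of_rat_poly p ^ n"
  by (induction n) (simp_all add: of_rat_poly_mult)

lemma of_rat_poly_diff: "of_rat_poly (p - q) = of_rat_poly p - of_rat_poly q"
  by (rule poly_eqI) (simp add: coeff_map_poly of_rat_diff)

lemma of_rat_poly_smult: "of_rat_poly (smult c p) = smult (of_rat c) (of_rat_poly p)"
  by (rule map_poly_smult) (simp_all add: of_rat_mult)

lemma poly_of_rat_poly_of_rat: "poly (of_rat_poly F) (of_rat c) = of_rat (poly F c)"
  by (induction F) (simp_all add: map_poly_pCons of_rat_add of_rat_mult)

lemma bernstein_coeff_of_rat_poly: "bernstein_coeff (of_rat_poly F) n k = of_rat (bernstein_coeff F n k)"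
  by (simp add: bernstein_coeff_def coeff_map_poly of_rat_sum of_rat_mult)

lemma poly_pos_at_ends:
  fixes H :: "real poly"
  assumes pos: "\<And>x. 0 < x \<Longrightarrow> x < 1 \<Longrightarrow> 0 < poly H x" and "poly H 0 \<noteq> 0" "poly H 1 \<noteq> 0"
  shows "0 < poly H 0" "0 < poly H 1"
proof -
  show "0 < poly H 0"
  proof (rule ccontr)
    assume "\<not> 0 < poly H 0"
    then obtain z where "0 < z" "z < 1/2" "poly H z = 0"
      using poly_IVT_pos[of 0 "1/2" H] pos[of "1/2"] \<open>poly H 0 \<noteq> 0\<close> by force
    then show False using pos[of z] by simp
  qed
  show "0 < poly H 1"
  proof (rule ccontr)
    assume "\<not> 0 < poly H 1"
    then obtain z where "1/2 < z" "z < 1" "poly H z = 0"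
      using poly_IVT_neg[of "1/2" 1 H] pos[of "1/2"] \<open>poly H 1 \<noteq> 0\<close> by force
    then show False using pos[of z] by simp
  qed
qed

lemma poly_factor_roots_0_1:
  fixes F :: "'a::idom poly"
  assumes "F \<noteq> 0"
  obtains i j G where "F = [:0, 1:] ^ i * [:-1, 1:] ^ j * G" "poly G 0 \<noteq> 0" "poly G 1 \<noteq> 0"
proof -
  obtain G0 where G0: "F = [:0, 1:] ^ order 0 F * G0" "\<not> [:0, 1:] dvd G0"
    using order_decomp[OF assms, of 0] by auto
  then have "G0 \<noteq> 0" by auto
  then obtain G where G: "G0 = [:-1, 1:] ^ order 1 G0 * G" "\<not> [:-1, 1:] dvd G"
    using order_decomp[of G0 1] by auto
  have "poly G 0 \<noteq> 0"
  proof
    assume "poly G 0 = 0"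
    then have "[:0, 1:] dvd G" by (simp add: poly_eq_0_iff_dvd)
    then have "[:0, 1:] dvd G0" using G(1) by (metis dvd_mult)
    with G0(2) show False ..
  qed
  moreover have "poly G 1 \<noteq> 0"
    using G(2) by (simp add: poly_eq_0_iff_dvd)
  moreover have "F = [:0, 1:] ^ order 0 F * [:-1, 1:] ^ order 1 G0 * G"
    using G0(1) G(1) by (simp add: mult.assoc)
  ultimately show ?thesis using that by blast
qed

lemma rat_poly_pos_factor:
  fixes F :: "rat poly"
  assumes pos: "\<And>x. 0 < x \<Longrightarrow> x < 1 \<Longrightarrow> 0 < poly (of_rat_poly F) x"
  obtains i j H where "\<And>x. poly (of_rat_poly F) x = x ^ i * (1 - x) ^ j * poly (of_rat_poly H) x"
    and "\<And>x. 0 \<le> x \<Longrightarrow> x \<le> 1 \<Longrightarrow> 0 < poly (of_rat_poly H) x"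
proof -
  have "F \<noteq> 0" using pos[of "1/2"] by auto
  then obtain i j G where G: "F = [:0, 1:] ^ i * [:-1, 1:] ^ j * G" "poly G 0 \<noteq> 0" "poly G 1 \<noteq> 0"
    by (rule poly_factor_roots_0_1)
  define H where "H = smult ((-1) ^ j) G"
  have F_eq: "poly (of_rat_poly F) x = x ^ i * (1 - x) ^ j * poly (of_rat_poly H) x" for x
  proof -
    have "poly (of_rat_poly F) x = x ^ i * (x - 1) ^ j * poly (of_rat_poly G) x"
      by (subst G(1)) (simp add: of_rat_poly_mult of_rat_poly_power map_poly_pCons)
    also have "(x - 1) ^ j = (-1) ^ j * (1 - x) ^ j"
      by (simp add: power_mult_distrib[symmetric])
    finally show ?thesis by (simp add: H_def of_rat_poly_smult of_rat_power)
  qed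
  have open_pos: "0 < poly (of_rat_poly H) x" if "0 < x" "x < 1" for x
  proof -
    have "0 < x ^ i * (1 - x) ^ j" using that by simp
    then show ?thesis using pos[OF that] unfolding F_eq by (metis zero_less_mult_pos)
  qed
  have "poly (of_rat_poly H) 0 \<noteq> 0" "poly (of_rat_poly H) 1 \<noteq> 0"
    using G(2,3) poly_of_rat_poly_of_rat[of H 0] poly_of_rat_poly_of_rat[of H 1] by (simp_all add: H_def)
  from poly_pos_at_ends[OF open_pos this]
  have "0 < poly (of_rat_poly H) x" if "0 \<le> x" "x \<le> 1" for x
    using open_pos that by (cases "x = 0"; cases "x = 1") auto
  with F_eq that show ?thesis by blast
qed

lemma rat_poly_bernstein_nonneg:
  fixes F :: "rat poly"
  assumes "\<And>x. 0 < x \<Longrightarrow> x < 1 \<Longrightarrow> 0 < poly (of_rat_poly F) x"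
  shows "\<exists>n0. \<forall>n\<ge>n0. \<exists>a. (\<forall>k. 0 \<le> a k) \<and> (\<forall>x. poly (of_rat_poly F) x = bernstein_form n (\<lambda>k. of_rat (a k)) x)"
proof -
  obtain i j H where F: "\<And>x. poly (of_rat_poly F) x = x ^ i * (1 - x) ^ j * poly (of_rat_poly H) x"
    and H: "\<And>x. 0 \<le> x \<Longrightarrow> x \<le> 1 \<Longrightarrow> 0 < poly (of_rat_poly H) x"
    using rat_poly_pos_factor[OF assms] by blast
  obtain n1 where n1: "\<And>n k. n1 \<le> n \<Longrightarrow> k \<le> n \<Longrightarrow> 0 \<le> bernstein_coeff (of_rat_poly H) n k"
    using bernstein_coeff_nonneg_eventually[OF H] by blast
  have *: "\<exists>a. (\<forall>k. 0 \<le> a k) \<and> (\<forall>x. poly (of_rat_poly F) x = bernstein_form (n + i + j) (\<lambda>k. of_rat (a k)) x)"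
    if n: "max n1 (degree H) \<le> n" for n
  proof (intro exI conjI allI)
    let ?a = "\<lambda>k. if i \<le> k \<and> k \<le> i + n then bernstein_coeff H n (k - i) else 0"
    show "0 \<le> ?a k" for k
      using n1[of n "k - i"] n by (auto simp: bernstein_coeff_of_rat_poly zero_le_of_rat_iff)
    have H_form: "poly (of_rat_poly H) x = bernstein_form n (bernstein_coeff (of_rat_poly H) n) x" for x
      using n by (intro poly_eq_bernstein_form) (simp add: degree_map_poly)
    show "poly (of_rat_poly F) x = bernstein_form (n + i + j) (\<lambda>k. of_rat (?a k)) x" for x
      unfolding F H_form bernstein_form_shift by (intro bernstein_form_cong) (auto simp: bernstein_coeff_of_rat_poly)
  qed
  show ?thesis
  proof (rule exI[of _ "max n1 (degree H) + i + j"], intro allI impI)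
    fix N assume "max n1 (degree H) + i + j \<le> N"
    then have "max n1 (degree H) \<le> N - i - j" "N - i - j + i + j = N" by auto
    with *[of "N - i - j"]
    show "\<exists>a. (\<forall>k. 0 \<le> a k) \<and> (\<forall>x. poly (of_rat_poly F) x = bernstein_form N (\<lambda>k. of_rat (a k)) x)"
      by simp
  qed
qed

lemma rat_common_denominator:
  fixes S :: "rat set"
  assumes "finite S"
  obtains K :: nat where "0 < K" "\<And>q. q \<in> S \<Longrightarrow> of_nat K * q \<in> \<int>"
proof -
  have "\<exists>K :: nat. 0 < K \<and> (\<forall>q\<in>S. of_nat K * q \<in> \<int>)"
    using assms
  proof (induction S rule: finite_induct)
    case (insert q S)
    then obtain K :: nat where K: "0 < K" "\<forall>q\<in>S. of_nat K * q \<in> \<int>" by blast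
    obtain a b where ab: "quotient_of q = (a, b)" by force
    then have "0 < b" "q = of_int a / of_int b"
      by (simp_all add: quotient_of_denom_pos quotient_of_div)
    then have Kb: "(of_nat (K * nat b) :: rat) = of_int b * of_nat K"
      by simp
    have "of_nat (K * nat b) * q' \<in> \<int>" if "q' \<in> insert q S" for q'
    proof (cases "q' = q")
      case True
      have "of_nat (K * nat b) * q = of_int (int K * a)"
        using \<open>0 < b\<close> \<open>q = of_int a / of_int b\<close> unfolding Kb by simp
      then show ?thesis unfolding True by (metis Ints_of_int)
    next
      case False
      then have "of_nat K * q' \<in> \<int>" using that K(2) by simp
      then show ?thesis unfolding Kb mult.assoc by (rule Ints_mult[OF Ints_of_int])
    qed
    moreover have "0 < K * nat b" using K(1) \<open>0 < b\<close> by simp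
    ultimately show ?case by blast
  qed (rule exI[of _ 1], simp)
  then show ?thesis using that by blast
qed

lemma integer_bernstein_forms:
  fixes F :: "'v \<Rightarrow> rat poly"
  assumes "finite V" and pos: "\<And>v x. v \<in> V \<Longrightarrow> 0 < x \<Longrightarrow> x < 1 \<Longrightarrow> 0 < poly (of_rat_poly (F v)) x"
  shows "\<exists>K n b. 0 < K \<and>
    (\<forall>v\<in>V. \<forall>x. real K * poly (of_rat_poly (F v)) x = bernstein_form n (\<lambda>k. real (b v k)) x)"
proof -
  have "\<forall>v\<in>V. \<exists>n0. \<forall>n\<ge>n0. \<exists>a. (\<forall>k. 0 \<le> a k) \<and>
      (\<forall>x. poly (of_rat_poly (F v)) x = bernstein_form n (\<lambda>k. of_rat (a k)) x)"
    using rat_poly_bernstein_nonneg pos by blast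
  then obtain n0 where n0: "\<forall>v\<in>V. \<forall>n\<ge>n0 v. \<exists>a. (\<forall>k. 0 \<le> a k) \<and>
      (\<forall>x. poly (of_rat_poly (F v)) x = bernstein_form n (\<lambda>k. of_rat (a k)) x)"
    by (metis bchoice)
  define n where "n = (\<Sum>v\<in>V. n0 v)"
  have "\<forall>v\<in>V. \<exists>a. (\<forall>k. 0 \<le> a k) \<and> (\<forall>x. poly (of_rat_poly (F v)) x = bernstein_form n (\<lambda>k. of_rat (a k)) x)"
    using n0 member_le_sum[of _ V n0] \<open>finite V\<close> unfolding n_def by blast
  then obtain a where a: "\<forall>v\<in>V. (\<forall>k. 0 \<le> a v k) \<and>
      (\<forall>x. poly (of_rat_poly (F v)) x = bernstein_form n (\<lambda>k. of_rat (a v k)) x)"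
    by (metis bchoice)
  obtain K :: nat where K: "0 < K" "\<And>q. q \<in> (\<Union>v\<in>V. a v ` {..n}) \<Longrightarrow> of_nat K * q \<in> \<int>"
    using rat_common_denominator[of "\<Union>v\<in>V. a v ` {..n}"] \<open>finite V\<close> by blast
  define b where "b v k = nat \<lfloor>of_nat K * a v k\<rfloor>" for v k
  have b: "of_nat (b v k) = of_nat K * a v k" if "v \<in> V" "k \<le> n" for v k
  proof -
    have "a v k \<in> (\<Union>v\<in>V. a v ` {..n})" using that by blast
    then obtain z where z: "of_nat K * a v k = of_int z"
      using K(2) by (auto elim!: Ints_cases)
    moreover have "0 \<le> of_nat K * a v k"
      using a that by simp
    ultimately show ?thesis by (simp add: b_def)
  qed
  have "real K * poly (of_rat_poly (F v)) x = bernstein_form n (\<lambda>k. real (b v k)) x" if "v \<in> V" for v x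
    unfolding a[rule_format, OF that, THEN conjunct2, rule_format] bernstein_form_scale
  proof (rule bernstein_form_cong)
    fix k assume "k \<le> n"
    have "real K * of_rat (a v k) = of_rat (of_nat K * a v k)" by (simp add: of_rat_mult)
    then show "real K * of_rat (a v k) = real (b v k)"
      using b[OF that \<open>k \<le> n\<close>] by (metis of_rat_of_nat_eq)
  qed
  with K(1) show ?thesis by blast
qed

lemma n0_add_n1: "n0 w + n1 w = length w"
  by (induction w) (auto simp: n0_def n1_def)

definition words_with_ones :: "nat \<Rightarrow> nat \<Rightarrow> bool list set" where
  "words_with_ones n k = {w \<in> words n. n1 w = k}"

lemma card_words_with_ones: "card (words_with_ones n k) = n choose k"
proof (induction n arbitrary: k)
  case 0
  have "words_with_ones 0 k = (if k = 0 then {[]} else {})"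
    by (auto simp: words_with_ones_def words_0 n1_def)
  then show ?case by simp
next
  case (Suc n)
  have split: "words_with_ones (Suc n) k =
      Cons True ` {w \<in> words n. Suc (n1 w) = k} \<union> Cons False ` words_with_ones n k"
    unfolding words_with_ones_def words_Suc by (auto simp: n1_def)
  have "card (words_with_ones (Suc n) k) = card {w \<in> words n. Suc (n1 w) = k} + card (words_with_ones n k)"
    unfolding split by (subst card_Un_disjoint) (auto simp: card_image words_with_ones_def)
  also have "\<dots> = Suc n choose k"
  proof (cases k)
    case (Suc k')
    then have "{w \<in> words n. Suc (n1 w) = k} = words_with_ones n k'"
      by (auto simp: words_with_ones_def)
    then show ?thesis using Suc.IH Suc by simp
  qed (simp add: Suc.IH)
  finally show ?case .
qed

lemma Pword_words_with_ones: "w \<in> words_with_ones n k \<Longrightarrow> Pword x w = x ^ k * (1 - x) ^ (n - k)"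
  using n0_add_n1[of w] by (auto simp: words_with_ones_def words_def Pword_def)

lemma verdict_prob_eq_bernstein_form:
  "verdict_prob N dec x v = bernstein_form N (\<lambda>k. real (card {w \<in> words_with_ones N k. dec w = v})) x"
proof -
  have "finite {w \<in> words N. dec w = v}" by simp
  moreover have "n1 ` {w \<in> words N. dec w = v} \<subseteq> {..N}"
    by (auto simp: words_def n1_def)
  ultimately have "verdict_prob N dec x v = (\<Sum>k\<le>N. \<Sum>w | w \<in> {w \<in> words N. dec w = v} \<and> n1 w = k. Pword x w)"
    unfolding verdict_prob_def by (intro sum.group[symmetric]) auto
  also have "\<dots> = (\<Sum>k\<le>N. real (card {w \<in> words_with_ones N k. dec w = v}) * x ^ k * (1 - x) ^ (N - k))"
  proof (intro sum.cong refl)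
    fix k
    have "{w. w \<in> {w \<in> words N. dec w = v} \<and> n1 w = k} = {w \<in> words_with_ones N k. dec w = v}"
      by (auto simp: words_with_ones_def)
    moreover have "(\<Sum>w\<in>{w \<in> words_with_ones N k. dec w = v}. Pword x w) =
        (\<Sum>w\<in>{w \<in> words_with_ones N k. dec w = v}. x ^ k * (1 - x) ^ (N - k))"
      by (intro sum.cong) (auto simp: Pword_words_with_ones)
    ultimately show "(\<Sum>w | w \<in> {w \<in> words N. dec w = v} \<and> n1 w = k. Pword x w) =
        real (card {w \<in> words_with_ones N k. dec w = v}) * x ^ k * (1 - x) ^ (N - k)"
      by simp
  qed
  finally show ?thesis unfolding bernstein_form_def .
qed

lemma exists_map_with_fibre_cards:
  assumes "finite V" "finite S" "(\<Sum>v\<in>V. c v) = card S"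
  shows "\<exists>f. f ` S \<subseteq> V \<and> (\<forall>v\<in>V. card {x \<in> S. f x = v} = c v)"
  using assms
proof (induction V arbitrary: S rule: finite_induct)
  case empty
  then show ?case by simp
next
  case (insert v V)
  then have "c v \<le> card S" by simp
  then obtain T where T: "T \<subseteq> S" "card T = c v" "finite T"
    by (rule obtain_subset_with_card_n)
  then have "(\<Sum>u\<in>V. c u) = card (S - T)"
    using insert by (simp add: card_Diff_subset finite_subset)
  then obtain f where f: "f ` (S - T) \<subseteq> V" "\<forall>u\<in>V. card {x \<in> S - T. f x = u} = c u"
    using insert by blast
  define g where "g x = (if x \<in> T then v else f x)" for x
  have "{x \<in> S. g x = v} = T"
    using f(1) T(1) insert(2) by (auto simp: g_def)
  moreover have "{x \<in> S. g x = u} = {x \<in> S - T. f x = u}" if "u \<in> V" for u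
    using that insert(2) by (auto simp: g_def)
  ultimately have "\<forall>u\<in>insert v V. card {x \<in> S. g x = u} = c u"
    using f(2) T(2) by auto
  moreover have "g ` S \<subseteq> insert v V"
    using f(1) by (auto simp: g_def)
  ultimately show ?case by blast
qed

lemma exists_verdict_table:
  fixes c :: "'v::finite \<Rightarrow> nat \<Rightarrow> nat"
  assumes "\<And>k. k \<le> N \<Longrightarrow> (\<Sum>v\<in>UNIV. c v k) = N choose k"
  shows "\<exists>dec. \<forall>v k. k \<le> N \<longrightarrow> card {w \<in> words_with_ones N k. dec w = v} = c v k"
proof -
  have "\<exists>f. k \<le> N \<longrightarrow> (\<forall>v. card {w \<in> words_with_ones N k. f w = v} = c v k)" for k
  proof (cases "k \<le> N")
    case True
    have fin: "finite (words_with_ones N k)" by (simp add: words_with_ones_def)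
    have "(\<Sum>v\<in>UNIV. c v k) = card (words_with_ones N k)"
      using assms[OF True] by (simp add: card_words_with_ones)
    from exists_map_with_fibre_cards[OF finite_class.finite_UNIV fin this]
    obtain f where "\<forall>v\<in>UNIV. card {w \<in> words_with_ones N k. f w = v} = c v k"
      by blast
    then show ?thesis by auto
  qed simp
  then have "\<forall>k. \<exists>f. k \<le> N \<longrightarrow> (\<forall>v. card {w \<in> words_with_ones N k. f w = v} = c v k)"
    by blast
  from choice[OF this] obtain f
    where f: "\<forall>k. k \<le> N \<longrightarrow> (\<forall>v. card {w \<in> words_with_ones N k. f k w = v} = c v k)"
    by blast
  have "{w \<in> words_with_ones N k. f (n1 w) w = v} = {w \<in> words_with_ones N k. f k w = v}" for k v
    by (auto simp: words_with_ones_def)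
  then show ?thesis
    using f by (intro exI[of _ "\<lambda>w. f (n1 w) w"]) simp
qed

text \<open>The factor \<open>x ^ s * (1 - x) ^ s\<close> moves the prescribed counts to \<open>s \<le> k \<le> s + n\<close>, where there
  are at least \<open>N\<close> words of length \<open>N\<close> with \<open>k\<close> ones, more than the counts add up to.\<close>

lemma exists_verdict_table_bernstein:
  fixes b :: "verdict \<Rightarrow> nat \<Rightarrow> nat"
  shows "\<exists>N dec s. 0 < N \<and> (\<forall>v x. v \<noteq> Retry \<longrightarrow>
    verdict_prob N dec x v = x ^ s * (1 - x) ^ s * bernstein_form n (\<lambda>k. real (b v k)) x)"
proof -
  let ?V = "- {Retry}"
  define s where "s = Suc (\<Sum>v\<in>?V. \<Sum>k\<le>n. b v k)"
  define N where "N = n + s + s"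
  define shifted where "shifted v k = (if s \<le> k \<and> k \<le> s + n then b v (k - s) else 0)" for v k
  define cnt where "cnt v k = (if v = Retry then (N choose k) - (\<Sum>u\<in>?V. shifted u k) else shifted v k)" for v k
  have shifted_le: "(\<Sum>u\<in>?V. shifted u k) \<le> N choose k" if "k \<le> N" for k
  proof (cases "s \<le> k \<and> k \<le> s + n")
    case True
    have "(\<Sum>u\<in>?V. shifted u k) = (\<Sum>u\<in>?V. b u (k - s))"
      using True by (simp add: shifted_def)
    also have "\<dots> \<le> (\<Sum>u\<in>?V. \<Sum>k\<le>n. b u k)"
      using True by (intro sum_mono member_le_sum) auto
    also have "\<dots> < N" by (simp add: N_def s_def)
    also have "N \<le> N choose k"
      using True by (intro upper_le_binomial) (auto simp: N_def s_def)
    finally show ?thesis by simp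
  qed (auto simp: shifted_def)
  have "(\<Sum>v\<in>UNIV. cnt v k) = N choose k" if "k \<le> N" for k
    using shifted_le[OF that] by (simp add: sum.remove[of UNIV Retry] Compl_eq_Diff_UNIV[symmetric] cnt_def)
  then obtain dec where dec: "\<And>v k. k \<le> N \<Longrightarrow> card {w \<in> words_with_ones N k. dec w = v} = cnt v k"
    using exists_verdict_table by blast
  have "verdict_prob N dec x v = x ^ s * (1 - x) ^ s * bernstein_form n (\<lambda>k. real (b v k)) x"
    if "v \<noteq> Retry" for v x
  proof -
    have "verdict_prob N dec x v = bernstein_form N (\<lambda>k. real (shifted v k)) x"
      unfolding verdict_prob_eq_bernstein_form using that by (intro bernstein_form_cong) (simp add: dec cnt_def)
    also have "\<dots> = x ^ s * (1 - x) ^ s * bernstein_form n (\<lambda>k. real (b v k)) x"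
      unfolding bernstein_form_shift N_def by (intro bernstein_form_cong) (auto simp: shifted_def add_ac)
    finally show ?thesis .
  qed
  moreover have "0 < N" by (simp add: N_def s_def)
  ultimately show ?thesis by blast
qed

lemma exists_verdict_table_proportional:
  fixes F :: "verdict \<Rightarrow> rat poly"
  assumes pos: "\<And>v x. v \<noteq> Retry \<Longrightarrow> 0 < x \<Longrightarrow> x < 1 \<Longrightarrow> 0 < poly (of_rat_poly (F v)) x"
  obtains N dec c where "0 < N" "\<And>x. 0 < x \<Longrightarrow> x < 1 \<Longrightarrow> 0 < c x"
    "\<And>v x. v \<noteq> Retry \<Longrightarrow> verdict_prob N dec x v = c x * poly (of_rat_poly (F v)) x"
proof -
  let ?V = "- {Retry}"
  have "finite ?V" by simp
  moreover have "\<And>v x. v \<in> ?V \<Longrightarrow> 0 < x \<Longrightarrow> x < 1 \<Longrightarrow> 0 < poly (of_rat_poly (F v)) x"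
    using pos by simp
  ultimately obtain K n b where K: "0 < K"
    and b: "\<And>v x. v \<in> ?V \<Longrightarrow> real K * poly (of_rat_poly (F v)) x = bernstein_form n (\<lambda>k. real (b v k)) x"
    using integer_bernstein_forms[of ?V F] by blast
  obtain N dec s where N: "0 < N"
    and dec: "\<And>v x. v \<noteq> Retry \<Longrightarrow> verdict_prob N dec x v = x ^ s * (1 - x) ^ s * bernstein_form n (\<lambda>k. real (b v k)) x"
    using exists_verdict_table_bernstein[of n b] by blast
  define c where "c x = x ^ s * (1 - x) ^ s * real K" for x :: real
  have "verdict_prob N dec x v = c x * poly (of_rat_poly (F v)) x" if "v \<noteq> Retry" for v x
    using dec[OF that] b[of v x] that by (simp add: c_def)
  moreover have "0 < c x" if "0 < x" "x < 1" for x
    using that K by (simp add: c_def)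
  ultimately show ?thesis using N that by blast
qed

lemma gamma_root:
  fixes g :: real
  assumes "0 < g" "g < 1/2"
  defines "\<gamma> \<equiv> (1 - sqrt (1 - 2 * g)) / (2 * g)"
  shows "2 * \<gamma> = 1 + 2 * g * \<gamma>\<^sup>2" "0 \<le> \<gamma>" "\<gamma> \<le> 1"
proof -
  define t where "t = sqrt (1 - 2 * g)"
  have t: "0 \<le> t" "t < 1" "t * t = 1 - 2 * g"
    using assms(1,2) by (auto simp: t_def real_sqrt_lt_1_iff)
  then have two_g: "2 * g = (1 - t) * (1 + t)" by (simp add: algebra_simps)
  have "\<gamma> = (1 - t) / (2 * g)" by (simp add: \<gamma>_def t_def)
  also have "\<dots> = 1 / (1 + t)"
    unfolding two_g using t by (intro nonzero_divide_mult_cancel_left) simp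
  finally have \<gamma>: "\<gamma> = 1 / (1 + t)" .
  have "1 + 2 * g * \<gamma>\<^sup>2 = 1 + (1 - t) * (1 + t) / ((1 + t) * (1 + t))"
    unfolding \<gamma> two_g by (simp add: power2_eq_square)
  also have "\<dots> = 1 + (1 - t) / (1 + t)"
    using t by simp
  also have "\<dots> = 2 * \<gamma>"
    unfolding \<gamma> using t by (simp add: field_simps)
  finally show "2 * \<gamma> = 1 + 2 * g * \<gamma>\<^sup>2" ..
  show "0 \<le> \<gamma>" "\<gamma> \<le> 1" unfolding \<gamma> using t by auto
qed

lemma descent_eq_gamma:
  assumes g: "0 < g" "g < 1/2" and "0 < a"
    and prob: "verdict_prob N dec p Pop = a" "verdict_prob N dec p Push = 2 * g * a"
      "verdict_prob N dec p Reject = (1 - 2 * g) * a"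
  shows "descent_eq N dec p ((1 - sqrt (1 - 2 * g)) / (2 * g))"
proof -
  define \<gamma> where "\<gamma> = (1 - sqrt (1 - 2 * g)) / (2 * g)"
  note root = gamma_root[OF g, folded \<gamma>_def]
  have "\<gamma> * (verdict_prob N dec p Pop + verdict_prob N dec p Push + verdict_prob N dec p Reject) = a * (2 * \<gamma>)"
    by (simp add: prob algebra_simps)
  also have "\<dots> = a * (1 + 2 * g * \<gamma>\<^sup>2)"
    by (simp only: root(1))
  also have "\<dots> = verdict_prob N dec p Pop + verdict_prob N dec p Push * \<gamma>\<^sup>2"
    by (simp add: prob algebra_simps)
  finally show ?thesis
    unfolding descent_eq_iff \<gamma>_def .
qed

lemma gamma_simulation:
  fixes P Q :: "rat poly"
  assumes "\<forall>p\<in>{0<..<1::real}. poly (of_rat_poly Q) p \<noteq> 0 \<and>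
    0 < poly (of_rat_poly P) p / poly (of_rat_poly Q) p \<and> poly (of_rat_poly P) p / poly (of_rat_poly Q) p < 1/2"
  shows "\<exists>M. wf_pda M \<and> pda_simulates M
    (\<lambda>p. let g = poly (of_rat_poly P) p / poly (of_rat_poly Q) p in (1 - sqrt (1 - 2 * g)) / (2 * g)) {0<..<1}"
proof -
  define F where "F v = (case v of Pop \<Rightarrow> Q * Q | Push \<Rightarrow> smult 2 (P * Q)
    | Reject \<Rightarrow> Q * Q - smult 2 (P * Q) | Retry \<Rightarrow> 0)" for v
  define g where "g x = poly (of_rat_poly P) x / poly (of_rat_poly Q) x" for x
  have g: "0 < g x" "g x < 1/2" and Q: "poly (of_rat_poly Q) x \<noteq> 0" if "0 < x" "x < 1" for x
    using assms that by (auto simp: g_def)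
  have F: "poly (of_rat_poly (F Pop)) x = poly (of_rat_poly Q) x ^ 2"
    "poly (of_rat_poly (F Push)) x = 2 * g x * poly (of_rat_poly Q) x ^ 2"
    "poly (of_rat_poly (F Reject)) x = (1 - 2 * g x) * poly (of_rat_poly Q) x ^ 2"
    if "0 < x" "x < 1" for x
    using Q[OF that] by (simp_all add: F_def g_def of_rat_poly_mult of_rat_poly_smult of_rat_poly_diff
        power2_eq_square algebra_simps)
  have "0 < poly (of_rat_poly (F v)) x" if "v \<noteq> Retry" "0 < x" "x < 1" for v x
    using g[OF that(2,3)] Q[OF that(2,3)] F[OF that(2,3)] that(1) by (cases v) simp_all
  then obtain N dec c where N: "0 < N" and c: "\<And>x. 0 < x \<Longrightarrow> x < 1 \<Longrightarrow> 0 < c x"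
    and prob: "\<And>v x. v \<noteq> Retry \<Longrightarrow> verdict_prob N dec x v = c x * poly (of_rat_poly (F v)) x"
    using exists_verdict_table_proportional by metis
  have "pda_simulates (counter_pda N dec) (\<lambda>p. (1 - sqrt (1 - 2 * g p)) / (2 * g p)) {0<..<1}"
  proof (rule counter_pda_simulates[OF N])
    fix p :: real assume "p \<in> {0<..<1}"
    then have p: "0 < p" "p < 1" by auto
    have "0 < c p * poly (of_rat_poly Q) p ^ 2" using c[OF p] Q[OF p] by simp
    moreover have "verdict_prob N dec p Pop = c p * poly (of_rat_poly Q) p ^ 2"
      "verdict_prob N dec p Push = 2 * g p * (c p * poly (of_rat_poly Q) p ^ 2)"
      "verdict_prob N dec p Reject = (1 - 2 * g p) * (c p * poly (of_rat_poly Q) p ^ 2)"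
      by (simp_all add: prob F[OF p])
    ultimately show "0 < verdict_prob N dec p Reject" "descent_eq N dec p ((1 - sqrt (1 - 2 * g p)) / (2 * g p))"
      using g[OF p] by (simp, intro descent_eq_gamma) simp_all
    show "0 \<le> (1 - sqrt (1 - 2 * g p)) / (2 * g p) \<and> (1 - sqrt (1 - 2 * g p)) / (2 * g p) \<le> 1"
      using gamma_root[OF g[OF p]] by simp
  qed auto
  then show ?thesis
    using wf_counter_pda[OF N] unfolding g_def Let_def by blast
qed

theorem mainTheorem11:
  shows "(\<forall>P Q :: rat poly.
            (\<forall>p\<in>{0<..<1::real}. poly (map_poly of_rat Q) p \<noteq> 0 \<and>
               0 < poly (map_poly of_rat P) p / poly (map_poly of_rat Q) p \<and>
               poly (map_poly of_rat P) p / poly (map_poly of_rat Q) p < 1/2) \<longrightarrow>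
            (\<exists>M. wf_pda M \<and>
               pda_simulates M
                 (\<lambda>p. let g = poly (map_poly of_rat P) p / poly (map_poly of_rat Q) p
                      in (1 - sqrt (1 - 2 * g)) / (2 * g))
                 {0<..<1}))
       \<and> (\<exists>M. wf_pda M \<and> pda_simulates M sqrt {0<..<1})"
  using gamma_simulation sqrt_simulation by blast

end
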